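(* Let $M$ be an $L$-structure, $G$ a group definable in $M$, and assume every complete type in $S_{G}(M)$ is definable. Then there is a universal minimal definable $G$-flow, it is unique up to isomorphism of $G$-flows (i.e. $G$-equivariant homeomorphism), and it coincides with any minimal nonempty closed $G$-invariant subset of $S_{G}(M)$ (with the restricted action).
   Context: $S_{G}(M)$ is the Stone space of complete types over $M$ containing the formula defining $G$, with $G$ acting by $g\cdot\mathrm{tp}(a/M)=\mathrm{tp}(ga/M)$ (computed in a saturated elementary extension of $M$). A type $p\in S(M)$ is definable if for every $L$-formula $\varphi(x,y)$, $\{b\in M:\varphi(x,b)\in p\}$ is definable in $M$. For a compact Hausdorff space $C$, a map $f\colon G\to C$ is definable if for any disjoint closed $C_{1},C_{2}\subseteq C$ there is a set $Y'\subseteq G$ definable in $M$ (with parameters) with $f^{-1}(C_{1})\subseteq Y'$ and $Y'\cap f^{-1}(C_{2})=\emptyset$. A definable $G$-flow is a compact Hausdorff space $X$ with an action of $G$ by homeomorphisms such that for each $x\in X$ the map $g\mapsto g\cdot x$ from $G$ to $X$ is definable. A $G$-map between flows is a continuous $G$-equivariant map. A minimal definable $G$-flow is a definable $G$-flow with no proper nonempty closed $G$-invariant subset. A universal minimal definable $G$-flow is a minimal definable $G$-flow $I$ such that for every minimal definable $G$-flow $X$ there is a $G$-map from $I$ to $X$. *)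

theory Defs
  imports "HOL-Analysis.Analysis" "HOL-Algebra.Group"
begin

text \<open>Terms and formulas of a first-order language L with function symbols of
type 'f and relation symbols of type 'r (a symbol may be used with any
arity; equivalently the symbols are the pairs of a name and an arity).\<close>

datatype 'f tm = Var nat | Fn 'f "'f tm list"

datatype ('f, 'r) fm =
    Eq "'f tm" "'f tm"
  | Rel 'r "'f tm list"
  | Neg "('f, 'r) fm"
  | Conj "('f, 'r) fm" "('f, 'r) fm"
  | Ex nat "('f, 'r) fm"

fun fv_tm :: "'f tm \<Rightarrow> nat set" where
  "fv_tm (Var i) = {i}"
| "fv_tm (Fn f ts) = (\<Union>t\<in>set ts. fv_tm t)"

fun fv :: "('f, 'r) fm \<Rightarrow> nat set" where
  "fv (Eq s t) = fv_tm s \<union> fv_tm t"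
| "fv (Rel r ts) = (\<Union>t\<in>set ts. fv_tm t)"
| "fv (Neg \<phi>) = fv \<phi>"
| "fv (Conj \<phi> \<psi>) = fv \<phi> \<union> fv \<psi>"
| "fv (Ex i \<phi>) = fv \<phi> - {i}"

record ('a, 'f, 'r) struc =
  dom :: "'a set"
  fnI :: "'f \<Rightarrow> 'a list \<Rightarrow> 'a"
  relI :: "'r \<Rightarrow> 'a list \<Rightarrow> bool"

definition is_struc :: "('a, 'f, 'r) struc \<Rightarrow> bool" where
  "is_struc M \<longleftrightarrow> dom M \<noteq> {} \<and>
     (\<forall>f xs. set xs \<subseteq> dom M \<longrightarrow> fnI M f xs \<in> dom M)"

fun eval :: "('a, 'f, 'r) struc \<Rightarrow> (nat \<Rightarrow> 'a) \<Rightarrow> 'f tm \<Rightarrow> 'a" where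
  "eval M e (Var i) = e i"
| "eval M e (Fn f ts) = fnI M f (map (eval M e) ts)"

fun sat :: "('a, 'f, 'r) struc \<Rightarrow> (nat \<Rightarrow> 'a) \<Rightarrow> ('f, 'r) fm \<Rightarrow> bool" where
  "sat M e (Eq s t) = (eval M e s = eval M e t)"
| "sat M e (Rel r ts) = relI M r (map (eval M e) ts)"
| "sat M e (Neg \<phi>) = (\<not> sat M e \<phi>)"
| "sat M e (Conj \<phi> \<psi>) = (sat M e \<phi> \<and> sat M e \<psi>)"
| "sat M e (Ex i \<phi>) = (\<exists>a\<in>dom M. sat M (e(i := a)) \<phi>)"

definition tuples :: "('a, 'f, 'r) struc \<Rightarrow> nat \<Rightarrow> 'a list set" where
  "tuples M n = {a. length a = n \<and> set a \<subseteq> dom M}"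

text \<open>The set defined in M^n by the formula phi(x_0..x_{n-1}, y) with the
parameter tuple c for y (variables x_i = i, y_j = n + j).\<close>
definition defset :: "('a, 'f, 'r) struc \<Rightarrow> nat \<Rightarrow> ('f, 'r) fm \<Rightarrow> 'a list \<Rightarrow> 'a list set" where
  "defset M n \<phi> c = {a \<in> tuples M n. sat M (\<lambda>i. (a @ c) ! i) \<phi>}"

definition definable :: "('a, 'f, 'r) struc \<Rightarrow> nat \<Rightarrow> 'a list set \<Rightarrow> bool" where
  "definable M n D \<longleftrightarrow> (\<exists>\<phi> c. set c \<subseteq> dom M \<and> fv \<phi> \<subseteq> {..<n + length c} \<and> D = defset M n \<phi> c)"

text \<open>A complete type over M in n variables, identified with the set of
M-definable subsets of M^n defined by its formulas, i.e. an ultrafilter of the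
Boolean algebra of M-definable subsets of M^n.\<close>
definition is_type :: "('a, 'f, 'r) struc \<Rightarrow> nat \<Rightarrow> 'a list set set \<Rightarrow> bool" where
  "is_type M n p \<longleftrightarrow>
     p \<subseteq> {D. definable M n D} \<and> tuples M n \<in> p \<and> {} \<notin> p \<and>
     (\<forall>D\<in>p. \<forall>E\<in>p. D \<inter> E \<in> p) \<and>
     (\<forall>D\<in>p. \<forall>E. definable M n E \<and> D \<subseteq> E \<longrightarrow> E \<in> p) \<and>
     (\<forall>D. definable M n D \<longrightarrow> D \<in> p \<or> tuples M n - D \<in> p)"

definition SG :: "('a, 'f, 'r) struc \<Rightarrow> nat \<Rightarrow> 'a list set \<Rightarrow> 'a list set set set" where
  "SG M n G = {p. is_type M n p \<and> G \<in> p}"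

definition SG_top :: "('a, 'f, 'r) struc \<Rightarrow> nat \<Rightarrow> 'a list set \<Rightarrow> 'a list set set topology" where
  "SG_top M n G = topology_generated_by {{p \<in> SG M n G. D \<in> p} | D. definable M n D}"

definition definable_type :: "('a, 'f, 'r) struc \<Rightarrow> nat \<Rightarrow> 'a list set set \<Rightarrow> bool" where
  "definable_type M n p \<longleftrightarrow>
     (\<forall>(\<phi> :: ('f, 'r) fm) m. fv \<phi> \<subseteq> {..<n + m} \<longrightarrow>
        definable M m {b \<in> tuples M m. defset M n \<phi> b \<in> p})"

text \<open>The action of G on S_G(M): g . tp(a/M) = tp(ga/M). A formula phi(x) with
parameters lies in tp(ga/M) iff the formula "phi(g x)" lies in tp(a/M);
in terms of defined sets: D \<in> g.p iff {a \<in> G. g a \<in> D} \<in> p.\<close>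
definition type_act :: "('a, 'f, 'r) struc \<Rightarrow> nat \<Rightarrow> ('a list, 'b) monoid_scheme \<Rightarrow>
    'a list \<Rightarrow> 'a list set set \<Rightarrow> 'a list set set" where
  "type_act M n Gr g p = {D. definable M n D \<and> {a \<in> carrier Gr. g \<otimes>\<^bsub>Gr\<^esub> a \<in> D} \<in> p}"

definition definable_map :: "('a, 'f, 'r) struc \<Rightarrow> nat \<Rightarrow> 'a list set \<Rightarrow> 'x topology \<Rightarrow>
    ('a list \<Rightarrow> 'x) \<Rightarrow> bool" where
  "definable_map M n G X f \<longleftrightarrow>
     (\<forall>C1 C2. closedin X C1 \<and> closedin X C2 \<and> C1 \<inter> C2 = {} \<longrightarrow>
        (\<exists>Y. definable M n Y \<and> Y \<subseteq> G \<and> {g \<in> G. f g \<in> C1} \<subseteq> Y \<and> Y \<inter> {g \<in> G. f g \<in> C2} = {}))"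

definition G_flow :: "('a list, 'b) monoid_scheme \<Rightarrow> 'x topology \<Rightarrow> ('a list \<Rightarrow> 'x \<Rightarrow> 'x) \<Rightarrow> bool" where
  "G_flow Gr X act \<longleftrightarrow> compact_space X \<and> Hausdorff_space X \<and>
     (\<forall>g\<in>carrier Gr. homeomorphic_map X X (act g)) \<and>
     (\<forall>x\<in>topspace X. act \<one>\<^bsub>Gr\<^esub> x = x) \<and>
     (\<forall>g\<in>carrier Gr. \<forall>h\<in>carrier Gr. \<forall>x\<in>topspace X. act (g \<otimes>\<^bsub>Gr\<^esub> h) x = act g (act h x))"

definition def_flow :: "('a, 'f, 'r) struc \<Rightarrow> nat \<Rightarrow> ('a list, 'b) monoid_scheme \<Rightarrow>
    'x topology \<Rightarrow> ('a list \<Rightarrow> 'x \<Rightarrow> 'x) \<Rightarrow> bool" where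
  "def_flow M n Gr X act \<longleftrightarrow> G_flow Gr X act \<and>
     (\<forall>x\<in>topspace X. definable_map M n (carrier Gr) X (\<lambda>g. act g x))"

definition invariant :: "('a list, 'b) monoid_scheme \<Rightarrow> ('a list \<Rightarrow> 'x \<Rightarrow> 'x) \<Rightarrow> 'x set \<Rightarrow> bool" where
  "invariant Gr act Y \<longleftrightarrow> (\<forall>g\<in>carrier Gr. \<forall>y\<in>Y. act g y \<in> Y)"

definition minimal_subflow :: "('a list, 'b) monoid_scheme \<Rightarrow> 'x topology \<Rightarrow>
    ('a list \<Rightarrow> 'x \<Rightarrow> 'x) \<Rightarrow> 'x set \<Rightarrow> bool" where
  "minimal_subflow Gr X act Y \<longleftrightarrow> Y \<noteq> {} \<and> closedin X Y \<and> invariant Gr act Y \<and>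
     (\<forall>Z. Z \<noteq> {} \<and> closedin X Z \<and> invariant Gr act Z \<and> Z \<subseteq> Y \<longrightarrow> Z = Y)"

definition min_def_flow :: "('a, 'f, 'r) struc \<Rightarrow> nat \<Rightarrow> ('a list, 'b) monoid_scheme \<Rightarrow>
    'x topology \<Rightarrow> ('a list \<Rightarrow> 'x \<Rightarrow> 'x) \<Rightarrow> bool" where
  "min_def_flow M n Gr X act \<longleftrightarrow> def_flow M n Gr X act \<and> minimal_subflow Gr X act (topspace X)"

definition G_map :: "('a list, 'b) monoid_scheme \<Rightarrow> 'x topology \<Rightarrow> ('a list \<Rightarrow> 'x \<Rightarrow> 'x) \<Rightarrow>
    'y topology \<Rightarrow> ('a list \<Rightarrow> 'y \<Rightarrow> 'y) \<Rightarrow> ('x \<Rightarrow> 'y) \<Rightarrow> bool" where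
  "G_map Gr X actX Y actY f \<longleftrightarrow> continuous_map X Y f \<and>
     (\<forall>g\<in>carrier Gr. \<forall>x\<in>topspace X. f (actX g x) = actY g (f x))"

definition G_iso :: "('a list, 'b) monoid_scheme \<Rightarrow> 'x topology \<Rightarrow> ('a list \<Rightarrow> 'x \<Rightarrow> 'x) \<Rightarrow>
    'y topology \<Rightarrow> ('a list \<Rightarrow> 'y \<Rightarrow> 'y) \<Rightarrow> ('x \<Rightarrow> 'y) \<Rightarrow> bool" where
  "G_iso Gr X actX Y actY f \<longleftrightarrow> G_map Gr X actX Y actY f \<and> homeomorphic_map X Y f"

text \<open>Universal minimal definable G-flow, with universality relative to all
minimal definable G-flows whose points live in the type 'z (HOL cannot
quantify over types inside a formula; at theorem level a free type variable
is universally quantified).\<close>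
definition univ_min_def_flow :: "('a, 'f, 'r) struc \<Rightarrow> nat \<Rightarrow> ('a list, 'b) monoid_scheme \<Rightarrow>
    'x topology \<Rightarrow> ('a list \<Rightarrow> 'x \<Rightarrow> 'x) \<Rightarrow> 'z itself \<Rightarrow> bool" where
  "univ_min_def_flow M n Gr I actI _ \<longleftrightarrow> min_def_flow M n Gr I actI \<and>
     (\<forall>(X :: 'z topology) actX. min_def_flow M n Gr X actX \<longrightarrow> (\<exists>f. G_map Gr I actI X actX f))"

end

theory Submission
  imports Defs
begin

text \<open>The type space \<open>S\<close> (= \<open>S_G(M)\<close>) with its Stone topology is a compact Hausdorff
G-flow.  If all types are definable, every orbit map \<open>g \<mapsto> g p\<close> is definable, and
conversely every point \<open>x0\<close> of a definable flow \<open>X\<close> gives a G-map \<open>S \<rightarrow> X\<close> sending \<open>p\<close> to the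
limit of \<open>g x0\<close> as \<open>g\<close> tends to \<open>p\<close>, which is unique because the orbit map of \<open>x0\<close> is
definable.  For \<open>X = S\<close> this gives the Ellis product on \<open>S\<close>, associative and continuous in the
left argument.  A minimal subflow \<open>I\<close> of \<open>S\<close> is a minimal definable flow, universal by the
extension property.  By the Ellis--Numakura lemma \<open>I\<close> contains an idempotent, which makes every
G-endomorphism of \<open>I\<close> a right multiplication with a left inverse, hence injective; so any two
universal minimal definable flows, mapping into each other, are isomorphic to \<open>I\<close>.\<close>

section \<open>Definable sets\<close>

fun rename_tm :: "(nat \<Rightarrow> nat) \<Rightarrow> 'f tm \<Rightarrow> 'f tm" where
  "rename_tm \<rho> (Var i) = Var (\<rho> i)"
| "rename_tm \<rho> (Fn f ts) = Fn f (map (rename_tm \<rho>) ts)"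

fun rename_fm :: "(nat \<Rightarrow> nat) \<Rightarrow> ('f, 'r) fm \<Rightarrow> ('f, 'r) fm" where
  "rename_fm \<rho> (Eq s t) = Eq (rename_tm \<rho> s) (rename_tm \<rho> t)"
| "rename_fm \<rho> (Rel r ts) = Rel r (map (rename_tm \<rho>) ts)"
| "rename_fm \<rho> (Neg \<phi>) = Neg (rename_fm \<rho> \<phi>)"
| "rename_fm \<rho> (Conj \<phi> \<psi>) = Conj (rename_fm \<rho> \<phi>) (rename_fm \<rho> \<psi>)"
| "rename_fm \<rho> (Ex i \<phi>) = Ex (\<rho> i) (rename_fm \<rho> \<phi>)"

lemma eval_rename_tm: "eval M e (rename_tm \<rho> t) = eval M (e \<circ> \<rho>) t"
  by (induction t) (auto intro!: arg_cong[where f = "fnI M _"])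

text \<open>Injectivity of the renaming prevents variable capture at the quantifiers.\<close>
lemma sat_rename_fm: "inj \<rho> \<Longrightarrow> sat M e (rename_fm \<rho> \<phi>) = sat M (e \<circ> \<rho>) \<phi>"
proof (induction \<phi> arbitrary: e)
  case (Ex i \<phi>)
  have "e(\<rho> i := a) \<circ> \<rho> = (e \<circ> \<rho>)(i := a)" for a
    using Ex.prems by (auto simp: fun_eq_iff inj_eq)
  then show ?case by (simp only: rename_fm.simps sat.simps Ex.IH[OF Ex.prems])
qed (auto simp: eval_rename_tm comp_def)

lemma eval_cong: "(\<forall>i\<in>fv_tm t. e i = e' i) \<Longrightarrow> eval M e t = eval M e' t"
proof (induction t)
  case (Fn f ts)
  have "map (eval M e) ts = map (eval M e') ts"
    using Fn by (auto simp del: map_eq_conv intro!: map_cong)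
  then show ?case by (simp del: map_eq_conv)
qed simp

lemma sat_cong: "(\<forall>i\<in>fv \<phi>. e i = e' i) \<Longrightarrow> sat M e \<phi> = sat M e' \<phi>"
proof (induction \<phi> arbitrary: e e')
  case (Eq s t) then show ?case using eval_cong[of s e e' M] eval_cong[of t e e' M] by simp
next
  case (Rel r ts)
  have "map (eval M e) ts = map (eval M e') ts"
    using Rel by (auto intro!: eval_cong)
  then show ?case by (simp only: sat.simps)
next
  case (Ex i \<phi>)
  have "\<And>a. sat M (e(i:=a)) \<phi> = sat M (e'(i:=a)) \<phi>"
    by (rule Ex.IH) (use Ex.prems in auto)
  then show ?case by simp
next
  case (Neg \<phi>) then show ?case using Neg.IH[of e e'] by simp
next
  case (Conj \<phi>1 \<phi>2)
  have "sat M e \<phi>1 = sat M e' \<phi>1" by (rule Conj.IH(1)) (use Conj.prems in auto)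
  moreover have "sat M e \<phi>2 = sat M e' \<phi>2" by (rule Conj.IH(2)) (use Conj.prems in auto)
  ultimately show ?case by simp
qed

lemma finite_fv_tm: "finite (fv_tm t)"
  by (induction t) auto

lemma finite_fv: "finite (fv \<phi>)"
  by (induction \<phi>) (auto simp: finite_fv_tm)

lemma fv_bounded: obtains B where "fv \<phi> \<subseteq> {..<B}"
  using finite_fv[of \<phi>] finite_nat_iff_bounded by auto

fun Ex_block :: "nat \<Rightarrow> nat \<Rightarrow> ('f, 'r) fm \<Rightarrow> ('f, 'r) fm" where
  "Ex_block N 0 \<phi> = \<phi>"
| "Ex_block N (Suc k) \<phi> = Ex_block N k (Ex (N + k) \<phi>)"

definition env_override :: "nat \<Rightarrow> 'a list \<Rightarrow> (nat \<Rightarrow> 'a) \<Rightarrow> nat \<Rightarrow> 'a" where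
  "env_override N z e i = (if N \<le> i \<and> i < N + length z then z ! (i - N) else e i)"

lemma env_override_snoc: "(env_override N z e)(N + length z := a) = env_override N (z @ [a]) e"
  by (auto simp: env_override_def fun_eq_iff nth_append)

lemma tuples_Suc_iff: "z' \<in> tuples M (Suc k) \<longleftrightarrow> (\<exists>z a. z' = z @ [a] \<and> z \<in> tuples M k \<and> a \<in> dom M)"
  by (auto simp: tuples_def length_Suc_conv_rev)

lemma sat_Ex_block: "sat M e (Ex_block N k \<phi>) \<longleftrightarrow> (\<exists>z\<in>tuples M k. sat M (env_override N z e) \<phi>)"
proof (induction k arbitrary: \<phi>)
  case 0
  have "env_override N [] e = e" by (auto simp: env_override_def fun_eq_iff)
  moreover have "tuples M 0 = {[]}" by (auto simp: tuples_def)
  ultimately show ?case by simp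
next
  case (Suc k)
  have "(env_override N z e)(N + k := a) = env_override N (z @ [a]) e" if "z \<in> tuples M k" for z a
    using env_override_snoc[of N z e a] that by (simp add: tuples_def)
  then have "sat M e (Ex_block N (Suc k) \<phi>) \<longleftrightarrow>
      (\<exists>z\<in>tuples M k. \<exists>a\<in>dom M. sat M (env_override N (z @ [a]) e) \<phi>)"
    using Suc.IH[of "Ex (N + k) \<phi>"] by simp
  then show ?case by (auto simp: tuples_Suc_iff)
qed

text \<open>Definability with the parameters supplied by an environment instead of a list,
which is easier to combine with renamings.\<close>

definition list_env :: "'a list \<Rightarrow> (nat \<Rightarrow> 'a) \<Rightarrow> nat \<Rightarrow> 'a" where
  "list_env a e i = (if i < length a then a ! i else e i)"

definition env_definable :: "('a, 'f, 'r) struc \<Rightarrow> nat \<Rightarrow> 'a list set \<Rightarrow> bool" where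
  "env_definable M n D \<longleftrightarrow> (\<exists>(\<phi> :: ('f, 'r) fm) e. (\<forall>i. e i \<in> dom M) \<and>
      D = {a \<in> tuples M n. sat M (list_env a e) \<phi>})"

lemma definable_imp_env_definable:
  assumes "is_struc M" "definable M n D" shows "env_definable M n D"
proof -
  obtain \<phi> c where c: "set c \<subseteq> dom M" "fv \<phi> \<subseteq> {..<n + length c}" "D = defset M n \<phi> c"
    using assms(2) unfolding definable_def by blast
  obtain d where d: "d \<in> dom M" using assms(1) unfolding is_struc_def by blast
  define e where "e i = (if i - n < length c then c ! (i - n) else d)" for i
  have e: "\<forall>i. e i \<in> dom M" using c(1) d by (auto simp: e_def)
  have "sat M (\<lambda>i. (a @ c) ! i) \<phi> = sat M (list_env a e) \<phi>" if "a \<in> tuples M n" for a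
    by (rule sat_cong) (use that c(2) in \<open>auto simp: nth_append list_env_def e_def tuples_def\<close>)
  then have "D = {a \<in> tuples M n. sat M (list_env a e) \<phi>}"
    using c(3) by (auto simp: defset_def)
  then show ?thesis unfolding env_definable_def using e by blast
qed

lemma env_definable_imp_definable:
  assumes "env_definable M n D" shows "definable M n D"
proof -
  obtain \<phi> e where e: "\<forall>i. e i \<in> dom M" "D = {a \<in> tuples M n. sat M (list_env a e) \<phi>}"
    using assms unfolding env_definable_def by blast
  obtain B where B: "fv \<phi> \<subseteq> {..<B}" by (rule fv_bounded)
  define c where "c = map (\<lambda>j. e (n + j)) [0..<B]"
  have c: "set c \<subseteq> dom M" "fv \<phi> \<subseteq> {..<n + length c}" using e B by (auto simp: c_def)
  have "sat M (\<lambda>i. (a @ c) ! i) \<phi> = sat M (list_env a e) \<phi>" if "a \<in> tuples M n" for a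
  proof (rule sat_cong, intro ballI)
    fix i assume "i \<in> fv \<phi>"
    then have "i < B" using B by auto
    then show "(a @ c) ! i = list_env a e i"
      using that by (auto simp: nth_append list_env_def c_def tuples_def)
  qed
  then have "D = defset M n \<phi> c" using e by (auto simp: defset_def)
  then show ?thesis unfolding definable_def using c by blast
qed

lemma env_definableI:
  "(\<And>i. e i \<in> dom M) \<Longrightarrow> D = {a \<in> tuples M n. sat M (list_env a e) \<phi>} \<Longrightarrow> definable M n D"
  by (rule env_definable_imp_definable) (auto simp: env_definable_def)

lemma definable_subset_tuples: "definable M n D \<Longrightarrow> D \<subseteq> tuples M n"
  by (auto simp: definable_def defset_def)

lemma definable_tuples:
  assumes "is_struc M" shows "definable M n (tuples M n)"
proof -
  obtain d where d: "d \<in> dom M" using assms unfolding is_struc_def by blast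
  show ?thesis by (rule env_definableI[where e = "\<lambda>_. d" and \<phi> = "Eq (Var 0) (Var 0)"]) (use d in auto)
qed

lemma definable_compl:
  assumes "is_struc M" "definable M n D" shows "definable M n (tuples M n - D)"
proof -
  obtain \<phi> e where e: "\<forall>i. e i \<in> dom M" "D = {a \<in> tuples M n. sat M (list_env a e) \<phi>}"
    using definable_imp_env_definable[OF assms] unfolding env_definable_def by blast
  show ?thesis by (rule env_definableI[where e = e and \<phi> = "Neg \<phi>"]) (use e in auto)
qed

text \<open>The second formula is moved, by an injective renaming, to parameter
variables that the first formula does not use.\<close>
lemma definable_Int:
  assumes "is_struc M" "definable M n D" "definable M n E"
  shows "definable M n (D \<inter> E)"
proof -
  obtain \<phi> e1 where e1: "\<forall>i. e1 i \<in> dom M" "D = {a \<in> tuples M n. sat M (list_env a e1) \<phi>}"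
    using definable_imp_env_definable[OF assms(1,2)] unfolding env_definable_def by blast
  obtain \<psi> e2 where e2: "\<forall>i. e2 i \<in> dom M" "E = {a \<in> tuples M n. sat M (list_env a e2) \<psi>}"
    using definable_imp_env_definable[OF assms(1,3)] unfolding env_definable_def by blast
  obtain B where B: "fv \<phi> \<subseteq> {..<B}" by (rule fv_bounded)
  define \<rho> where "\<rho> i = (if i < n then i else i + B + n)" for i
  define e where "e i = (if i < B + 2 * n then e1 i else e2 (i - B - n))" for i
  have inj: "inj \<rho>" unfolding inj_def \<rho>_def by auto
  have "sat M (list_env a e) \<phi> = sat M (list_env a e1) \<phi>" if "a \<in> tuples M n" for a
    by (rule sat_cong) (use that B in \<open>auto simp: list_env_def e_def tuples_def\<close>)
  moreover have "sat M (list_env a e) (rename_fm \<rho> \<psi>) = sat M (list_env a e2) \<psi>"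
    if "a \<in> tuples M n" for a
  proof -
    have "list_env a e \<circ> \<rho> = list_env a e2"
      using that by (auto simp: fun_eq_iff list_env_def e_def \<rho>_def tuples_def)
    then show ?thesis by (simp add: sat_rename_fm[OF inj])
  qed
  ultimately show ?thesis
    by (intro env_definableI[where e = e and \<phi> = "Conj \<phi> (rename_fm \<rho> \<psi>)"]) (use e1 e2 in \<open>auto simp: e_def\<close>)
qed

lemma definable_Un:
  assumes "is_struc M" "definable M n D" "definable M n E"
  shows "definable M n (D \<union> E)"
proof -
  have "D \<union> E = tuples M n - ((tuples M n - D) \<inter> (tuples M n - E))"
    using definable_subset_tuples[OF assms(2)] definable_subset_tuples[OF assms(3)] by auto
  then show ?thesis using assms by (simp add: definable_compl definable_Int)
qed

lemma definable_empty: "is_struc M \<Longrightarrow> definable M n {}"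
  using definable_compl[OF _ definable_tuples] by fastforce

lemma definable_preimage_coords:
  assumes "is_struc M" "definable M k D" "inj_on \<sigma> {..<k}" "\<sigma> ` {..<k} \<subseteq> {..<m}"
  shows "definable M m {a \<in> tuples M m. map (\<lambda>i. a ! \<sigma> i) [0..<k] \<in> D}"
proof -
  obtain \<phi> e where e: "\<forall>i. e i \<in> dom M" "D = {b \<in> tuples M k. sat M (list_env b e) \<phi>}"
    using definable_imp_env_definable[OF assms(1,2)] unfolding env_definable_def by blast
  define \<rho> where "\<rho> i = (if i < k then \<sigma> i else m + (i - k))" for i
  define e' where "e' i = e (k + (i - m))" for i
  have inj: "inj \<rho>"
    using assms(3,4) unfolding inj_def inj_on_def \<rho>_def by (smt (verit) add_diff_inverse_nat
        add_left_cancel image_subset_iff lessThan_iff less_diff_conv2 not_add_less1 not_le)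
  have "sat M (list_env a e') (rename_fm \<rho> \<phi>) \<longleftrightarrow> sat M (list_env (map (\<lambda>i. a ! \<sigma> i) [0..<k]) e) \<phi>"
    if "a \<in> tuples M m" for a
  proof -
    have "list_env a e' \<circ> \<rho> = list_env (map (\<lambda>i. a ! \<sigma> i) [0..<k]) e"
      using that assms(4) by (auto simp: fun_eq_iff list_env_def e'_def \<rho>_def tuples_def)
    then show ?thesis by (simp add: sat_rename_fm[OF inj])
  qed
  moreover have "map (\<lambda>i. a ! \<sigma> i) [0..<k] \<in> tuples M k" if "a \<in> tuples M m" for a
    using that assms(4) by (auto simp: tuples_def subset_iff)
  ultimately show ?thesis
    by (intro env_definableI[where e = e' and \<phi> = "rename_fm \<rho> \<phi>"]) (use e in \<open>auto simp: e'_def\<close>)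
qed

lemma definable_projection:
  assumes "is_struc M" "definable M (m + k) D"
  shows "definable M m {a \<in> tuples M m. \<exists>z\<in>tuples M k. a @ z \<in> D}"
proof -
  obtain \<phi> e where e: "\<forall>i. e i \<in> dom M" "D = {w \<in> tuples M (m + k). sat M (list_env w e) \<phi>}"
    using definable_imp_env_definable[OF assms] unfolding env_definable_def by blast
  have "env_override m z (list_env a e) = list_env (a @ z) e" if "length a = m" for a z
    using that by (auto simp: fun_eq_iff env_override_def list_env_def nth_append)
  then have "(\<exists>z\<in>tuples M k. a @ z \<in> D) \<longleftrightarrow> sat M (list_env a e) (Ex_block m k \<phi>)"
    if "a \<in> tuples M m" for a
    using that by (auto simp: e(2) sat_Ex_block tuples_def)
  then show ?thesis by (intro env_definableI[where e = e]) (use e in auto)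
qed

lemma defset_append_params:
  assumes "b \<in> tuples M k"
  shows "{a \<in> tuples M n. a @ b \<in> defset M (n + k) \<phi> c} = defset M n \<phi> (b @ c)"
  using assms by (auto simp: defset_def tuples_def)

lemma definable_fiber:
  assumes "definable M (n + k) W" "b \<in> tuples M k"
  shows "definable M n {a \<in> tuples M n. a @ b \<in> W}"
proof -
  obtain \<phi> c where c: "set c \<subseteq> dom M" "fv \<phi> \<subseteq> {..<n + k + length c}" "W = defset M (n + k) \<phi> c"
    using assms(1) unfolding definable_def by blast
  have "{a \<in> tuples M n. a @ b \<in> W} = defset M n \<phi> (b @ c)"
    using defset_append_params[OF assms(2)] c(3) by simp
  moreover have "set (b @ c) \<subseteq> dom M" "length b = k" using assms(2) c(1) by (auto simp: tuples_def)
  ultimately show ?thesis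
    unfolding definable_def using c(2) by (intro exI[of _ \<phi>] exI[of _ "b @ c"]) auto
qed

section \<open>Compact semigroups and flows\<close>

lemma compact_space_minimal_closed:
  assumes X: "compact_space X"
    and A: "\<And>Z. Z \<in> A \<Longrightarrow> closedin X Z \<and> Z \<noteq> {}" "A \<noteq> {}"
    and chains: "\<And>C. C \<noteq> {} \<Longrightarrow> subset.chain A C \<Longrightarrow> \<Inter>C \<noteq> {} \<Longrightarrow> \<Inter>C \<in> A"
  shows "\<exists>K\<in>A. \<forall>Z\<in>A. Z \<subseteq> K \<longrightarrow> Z = K"
proof -
  have "\<exists>K\<in>A. \<forall>Z\<in>A. Z \<subseteq> K \<longrightarrow> Z = K"
  proof (rule predicate_Zorn[where P = "\<lambda>Y Z. Z \<subseteq> Y"])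
    show "partial_order_on A (relation_of (\<lambda>Y Z. Z \<subseteq> Y) A)"
      by (auto simp: partial_order_on_def preorder_on_def refl_on_def trans_on_def
          antisym_on_def relation_of_def)
  next
    fix C assume "C \<in> Chains (relation_of (\<lambda>Y Z. Z \<subseteq> Y) A)"
    then have chain: "subset.chain A C"
      by (auto simp: Chains_def relation_of_def subset.chain_def)
    show "\<exists>K\<in>A. \<forall>Z\<in>C. K \<subseteq> Z"
    proof (cases "C = {}")
      case True then show ?thesis using A(2) by blast
    next
      case False
      have "\<Inter>C \<noteq> {}"
      proof (rule X[unfolded compact_space_fip, rule_format], intro conjI ballI allI impI)
        show "Z \<in> C \<Longrightarrow> closedin X Z" for Z using chain A(1) by (auto simp: subset.chain_def)
        fix F assume F: "finite F \<and> F \<subseteq> C"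
        show "\<Inter>F \<noteq> {}"
        proof (cases "F = {}")
          case False
          have "subset.chain A F" using F chain unfolding subset.chain_def by blast
          then have "\<Inter>F \<in> F" using F False Inter_in_chain by blast
          then show ?thesis using F chain A(1) by (auto simp: subset.chain_def)
        qed simp
      qed
      then show ?thesis using chains[OF False chain] by blast
    qed
  qed
  then show ?thesis by blast
qed

lemma closedin_compact_image:
  assumes "compact_space X" "Hausdorff_space Y" "continuous_map X Y f" "closedin X K"
  shows "closedin Y (f ` K)"
proof -
  have "compactin X K" using closedin_compact_space assms(1,4) .
  then have "compactin Y (f ` K)" using image_compactin assms(3) by blast
  then show ?thesis using compactin_imp_closedin assms(2) by blast
qed

definition closed_subsemigroup :: "'x topology \<Rightarrow> ('x \<Rightarrow> 'x \<Rightarrow> 'x) \<Rightarrow> 'x set \<Rightarrow> bool" where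
  "closed_subsemigroup X m L \<longleftrightarrow> L \<noteq> {} \<and> closedin X L \<and> (\<forall>a\<in>L. \<forall>b\<in>L. m a b \<in> L)"

lemma minimal_closed_subsemigroup:
  assumes "compact_space X" "closed_subsemigroup X m K"
  obtains L where "closed_subsemigroup X m L" "L \<subseteq> K"
    "\<And>Z. closed_subsemigroup X m Z \<Longrightarrow> Z \<subseteq> L \<Longrightarrow> Z = L"
proof -
  define A where "A = {L. closed_subsemigroup X m L \<and> L \<subseteq> K}"
  have "\<exists>L\<in>A. \<forall>Z\<in>A. Z \<subseteq> L \<longrightarrow> Z = L"
  proof (rule compact_space_minimal_closed[OF assms(1)])
    show "A \<noteq> {}" using assms(2) unfolding A_def by blast
    fix C assume C: "C \<noteq> {}" "subset.chain A C" "\<Inter>C \<noteq> {}"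
    have CA: "closedin X Z \<and> Z \<subseteq> K \<and> (\<forall>a\<in>Z. \<forall>b\<in>Z. m a b \<in> Z)" if "Z \<in> C" for Z
      using C(2) that unfolding A_def subset.chain_def closed_subsemigroup_def by blast
    have "closedin X (\<Inter>C)" using CA C(1) by (simp add: closedin_Inter)
    moreover have "\<Inter>C \<subseteq> K" using CA C(1) by blast
    moreover have "\<forall>a\<in>\<Inter>C. \<forall>b\<in>\<Inter>C. m a b \<in> \<Inter>C" using CA by blast
    ultimately show "\<Inter>C \<in> A" using C(3) by (simp add: A_def closed_subsemigroup_def)
  qed (simp add: A_def closed_subsemigroup_def)
  then obtain L where L: "L \<in> A" and Lmin: "\<And>Z. Z \<in> A \<Longrightarrow> Z \<subseteq> L \<Longrightarrow> Z = L" by blast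
  show thesis
  proof (rule that)
    show "closed_subsemigroup X m L" "L \<subseteq> K" using L by (simp_all add: A_def)
    fix Z assume Z: "closed_subsemigroup X m Z" "Z \<subseteq> L"
    have "Z \<subseteq> K" using Z(2) \<open>L \<subseteq> K\<close> by (rule order_trans)
    then show "Z = L" using Lmin Z by (simp add: A_def)
  qed
qed

lemma closed_subsemigroup_right_image:
  assumes X: "compact_space X" "Hausdorff_space X" and L: "closed_subsemigroup X m L" "u \<in> L"
    and assoc: "\<And>a b c. a \<in> L \<Longrightarrow> b \<in> L \<Longrightarrow> c \<in> L \<Longrightarrow> m (m a b) c = m a (m b c)"
    and cont: "continuous_map X X (\<lambda>a. m a u)"
  shows "closed_subsemigroup X m ((\<lambda>a. m a u) ` L)"
proof -
  have mult: "\<And>a b. a \<in> L \<Longrightarrow> b \<in> L \<Longrightarrow> m a b \<in> L" and "closedin X L" "L \<noteq> {}"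
    using L(1) by (auto simp: closed_subsemigroup_def)
  have "m x y \<in> (\<lambda>a. m a u) ` L" if xy: "x \<in> (\<lambda>a. m a u) ` L" "y \<in> (\<lambda>a. m a u) ` L" for x y
  proof -
    obtain a b where ab: "a \<in> L" "b \<in> L" "x = m a u" "y = m b u" using xy by blast
    then have "x \<in> L" using mult L(2) by simp
    then have "m x y = m (m x b) u" using assoc[of x b u] ab(2,4) L(2) by simp
    moreover have "m x b \<in> L" using \<open>x \<in> L\<close> ab(2) mult by simp
    ultimately show ?thesis by blast
  qed
  then show ?thesis
    using closedin_compact_image[OF X cont \<open>closedin X L\<close>] \<open>L \<noteq> {}\<close>
    unfolding closed_subsemigroup_def by blast
qed

text \<open>The Ellis--Numakura lemma.  In a minimal closed subsemigroup \<open>L\<close>, any \<open>u\<close> satisfies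
first \<open>L u = L\<close> and then \<open>{a \<in> L. a u = u} = L\<close>.\<close>
lemma Ellis_Numakura:
  fixes m :: "'x \<Rightarrow> 'x \<Rightarrow> 'x"
  assumes X: "compact_space X" "Hausdorff_space X" and K: "closed_subsemigroup X m K"
    and assoc: "\<And>a b c. a \<in> K \<Longrightarrow> b \<in> K \<Longrightarrow> c \<in> K \<Longrightarrow> m (m a b) c = m a (m b c)"
    and cont: "\<And>b. b \<in> K \<Longrightarrow> continuous_map X X (\<lambda>a. m a b)"
  shows "\<exists>u\<in>K. m u u = u"
proof -
  obtain L where L_sg: "closed_subsemigroup X m L" and LK: "L \<subseteq> K"
    and Lmin: "\<And>Z. closed_subsemigroup X m Z \<Longrightarrow> Z \<subseteq> L \<Longrightarrow> Z = L"
    using minimal_closed_subsemigroup[OF X(1) K] by blast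
  then have L: "L \<noteq> {}" "closedin X L" "\<And>a b. a \<in> L \<Longrightarrow> b \<in> L \<Longrightarrow> m a b \<in> L"
    by (simp_all add: closed_subsemigroup_def)
  obtain u where u: "u \<in> L" using L(1) by blast
  have uK: "u \<in> K" and uX: "u \<in> topspace X" using u LK closedin_subset[OF L(2)] by auto
  have "(\<lambda>a. m a u) ` L = L"
  proof (rule Lmin)
    show "closed_subsemigroup X m ((\<lambda>a. m a u) ` L)"
      by (rule closed_subsemigroup_right_image[OF X L_sg u _ cont[OF uK]])
        (use assoc LK in \<open>simp add: subset_eq\<close>)
  qed (use L(3) u in blast)
  then have "u \<in> (\<lambda>a. m a u) ` L" using u by simp
  define Z where "Z = {a \<in> L. m a u = u}"
  have "Z = L"
  proof (rule Lmin)
    have "closedin X {a \<in> topspace X. m a u = u}"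
      using closedin_continuous_maps_eq[OF X(2) cont[OF uK] continuous_map_const[THEN iffD2]] uX
      by simp
    moreover have "Z = L \<inter> {a \<in> topspace X. m a u = u}"
      using closedin_subset[OF L(2)] by (auto simp: Z_def)
    ultimately have "closedin X Z" using L(2) by (simp add: closedin_Int)
    moreover have "Z \<noteq> {}" using \<open>u \<in> (\<lambda>a. m a u) ` L\<close> by (auto simp: Z_def)
    moreover have "m a b \<in> Z" if "a \<in> Z" "b \<in> Z" for a b
    proof -
      have "a \<in> K" "b \<in> K" using that LK by (auto simp: Z_def)
      then show ?thesis using that assoc[of a b u] L(3) uK by (simp add: Z_def)
    qed
    ultimately show "closed_subsemigroup X m Z" unfolding closed_subsemigroup_def by blast
  qed (simp add: Z_def)
  then show ?thesis using u LK by (auto simp: Z_def)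
qed

lemma
  assumes "G_flow Gr X act"
  shows G_flow_compact: "compact_space X" and G_flow_Hausdorff: "Hausdorff_space X"
    and G_flow_homeomorphic: "g \<in> carrier Gr \<Longrightarrow> homeomorphic_map X X (act g)"
    and G_flow_one: "x \<in> topspace X \<Longrightarrow> act \<one>\<^bsub>Gr\<^esub> x = x"
    and G_flow_mult: "g \<in> carrier Gr \<Longrightarrow> h \<in> carrier Gr \<Longrightarrow> x \<in> topspace X \<Longrightarrow>
      act (g \<otimes>\<^bsub>Gr\<^esub> h) x = act g (act h x)"
  using assms by (simp_all add: G_flow_def)

lemma minimal_subflow_minimal:
  "minimal_subflow Gr X act I \<Longrightarrow> Z \<noteq> {} \<Longrightarrow> closedin X Z \<Longrightarrow> invariant Gr act Z \<Longrightarrow> Z \<subseteq> I \<Longrightarrow> Z = I"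
  unfolding minimal_subflow_def by blast

lemma G_flow_act_topspace:
  "G_flow Gr X act \<Longrightarrow> g \<in> carrier Gr \<Longrightarrow> x \<in> topspace X \<Longrightarrow> act g x \<in> topspace X"
  using G_flow_homeomorphic homeomorphic_imp_surjective_map by blast

lemma G_flow_act_inv:
  assumes "group Gr" "G_flow Gr X act" "g \<in> carrier Gr" "x \<in> topspace X"
  shows "act g (act (inv\<^bsub>Gr\<^esub> g) x) = x"
proof -
  have "act g (act (inv\<^bsub>Gr\<^esub> g) x) = act (g \<otimes>\<^bsub>Gr\<^esub> inv\<^bsub>Gr\<^esub> g) x"
    using assms G_flow_mult group.inv_closed by metis
  then show ?thesis using assms G_flow_one by (simp add: group.r_inv)
qed

lemma invariant_image_eq:
  assumes "group Gr" "G_flow Gr X act" "invariant Gr act I" "I \<subseteq> topspace X" "g \<in> carrier Gr"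
  shows "act g ` I = I"
proof
  show "act g ` I \<subseteq> I" using assms(3,5) unfolding invariant_def by blast
  show "I \<subseteq> act g ` I"
  proof
    fix y assume y: "y \<in> I"
    have "inv\<^bsub>Gr\<^esub> g \<in> carrier Gr" using assms(1,5) by (rule group.inv_closed)
    then have "act (inv\<^bsub>Gr\<^esub> g) y \<in> I" using assms(3) y unfolding invariant_def by blast
    moreover have "y \<in> topspace X" using y assms(4) by blast
    then have "y = act g (act (inv\<^bsub>Gr\<^esub> g) y)" using G_flow_act_inv[OF assms(1,2,5)] by simp
    ultimately show "y \<in> act g ` I" by blast
  qed
qed

lemma minimal_subflow_exists:
  assumes "G_flow Gr X act" "topspace X \<noteq> {}"
  shows "\<exists>I. minimal_subflow Gr X act I"
proof -
  define A where "A = {Z. Z \<noteq> {} \<and> closedin X Z \<and> invariant Gr act Z}"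
  have "\<exists>I\<in>A. \<forall>Z\<in>A. Z \<subseteq> I \<longrightarrow> Z = I"
  proof (rule compact_space_minimal_closed)
    show "compact_space X" using assms(1) by (simp add: G_flow_def)
    have "topspace X \<in> A"
      using assms G_flow_act_topspace unfolding A_def invariant_def by auto
    then show "A \<noteq> {}" by blast
    fix C assume C: "C \<noteq> {}" "subset.chain A C" "\<Inter>C \<noteq> {}"
    have CA: "closedin X Z \<and> invariant Gr act Z" if "Z \<in> C" for Z
      using C(2) that unfolding A_def subset.chain_def by blast
    have "closedin X (\<Inter>C)" using CA C(1) by (simp add: closedin_Inter)
    moreover have "invariant Gr act (\<Inter>C)" using CA unfolding invariant_def by blast
    ultimately show "\<Inter>C \<in> A" using C(3) by (simp add: A_def)
  qed (simp add: A_def)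
  then show ?thesis unfolding minimal_subflow_def A_def by blast
qed

lemma min_def_flow_subtopology:
  assumes grp: "group Gr" and X: "def_flow M n Gr X act" and I: "minimal_subflow Gr X act I"
  shows "min_def_flow M n Gr (subtopology X I) act"
proof -
  have flow: "G_flow Gr X act" using X by (simp add: def_flow_def)
  have I_closed: "closedin X I" and I_inv: "invariant Gr act I"
    using I by (auto simp: minimal_subflow_def)
  have I_top: "I \<subseteq> topspace X" using closedin_subset[OF I_closed] .
  have top: "topspace (subtopology X I) = I" using I_top by (simp add: Int_absorb1)
  have hom: "homeomorphic_map (subtopology X I) (subtopology X I) (act g)" if g: "g \<in> carrier Gr" for g
  proof (rule homeomorphic_map_subtopologies)
    show "homeomorphic_map X X (act g)" using G_flow_homeomorphic[OF flow g] .
    show "act g ` (topspace X \<inter> I) = topspace X \<inter> I"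
      using invariant_image_eq[OF grp flow I_inv I_top g] I_top by (simp add: Int_absorb1)
  qed
  have "G_flow Gr (subtopology X I) act"
    unfolding G_flow_def top
    using compact_space_subtopology[OF closedin_compact_space[OF G_flow_compact[OF flow] I_closed]]
      Hausdorff_space_subtopology[OF G_flow_Hausdorff[OF flow]] hom
      G_flow_one[OF flow] G_flow_mult[OF flow] I_top by blast
  moreover have "definable_map M n (carrier Gr) (subtopology X I) (\<lambda>g. act g x)" if "x \<in> I" for x
  proof -
    have "definable_map M n (carrier Gr) X (\<lambda>g. act g x)"
      using X that I_top unfolding def_flow_def by blast
    then show ?thesis
      unfolding definable_map_def using closedin_trans_full[OF _ I_closed] by blast
  qed
  moreover have "minimal_subflow Gr (subtopology X I) act I"
    using I closedin_trans_full[OF _ I_closed] unfolding minimal_subflow_def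
    by (simp add: closedin_subtopology_refl I_top)
  ultimately show ?thesis unfolding min_def_flow_def def_flow_def top by blast
qed

lemma G_map_compose:
  assumes h: "G_map Gr X aX Y aY h" and f: "G_map Gr Y aY Z aZ f"
  shows "G_map Gr X aX Z aZ (f \<circ> h)"
proof -
  have "h x \<in> topspace Y" if "x \<in> topspace X" for x
    using h that by (auto simp: G_map_def dest: continuous_map_image_subset_topspace)
  then show ?thesis
    using h f continuous_map_compose unfolding G_map_def by fastforce
qed

lemma
  assumes "G_map Gr X aX Y aY h"
  shows G_map_continuous: "continuous_map X Y h"
    and G_map_equivariant: "g \<in> carrier Gr \<Longrightarrow> x \<in> topspace X \<Longrightarrow> h (aX g x) = aY g (h x)"
  using assms by (simp_all add: G_map_def)

lemma G_map_onto_minimal: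
  assumes h: "G_map Gr X aX Y aY h" and X: "G_flow Gr X aX" "topspace X \<noteq> {}"
    and Y: "Hausdorff_space Y" "minimal_subflow Gr Y aY (topspace Y)"
  shows "h ` topspace X = topspace Y"
proof (rule minimal_subflow_minimal[OF Y(2)])
  show "h ` topspace X \<noteq> {}" using X(2) by blast
  show "closedin Y (h ` topspace X)"
    using closedin_compact_image[OF G_flow_compact[OF X(1)] Y(1) G_map_continuous[OF h]] by simp
  show "h ` topspace X \<subseteq> topspace Y"
    using continuous_map_image_subset_topspace[OF G_map_continuous[OF h]] .
  show "invariant Gr aY (h ` topspace X)"
    unfolding invariant_def
  proof (intro ballI)
    fix g y assume g: "g \<in> carrier Gr" and "y \<in> h ` topspace X"
    then obtain x where x: "x \<in> topspace X" "y = h x" by blast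
    then have "aY g y = h (aX g x)" using G_map_equivariant[OF h g x(1)] by simp
    then show "aY g y \<in> h ` topspace X" using G_flow_act_topspace[OF X(1) g x(1)] by blast
  qed
qed

lemma G_iso_if_endomorphisms_inj:
  assumes X: "G_flow Gr X aX" "topspace X \<noteq> {}"
    and Y: "G_flow Gr Y aY" "minimal_subflow Gr Y aY (topspace Y)"
    and h: "G_map Gr X aX Y aY h" and f: "G_map Gr Y aY X aX f"
    and endo_inj: "\<And>\<phi>. G_map Gr X aX X aX \<phi> \<Longrightarrow> inj_on \<phi> (topspace X)"
  shows "G_iso Gr X aX Y aY h"
proof -
  have "inj_on h (topspace X)"
    using endo_inj[OF G_map_compose[OF h f]] inj_on_imageI2 by blast
  moreover have "h ` topspace X = topspace Y"
    using G_map_onto_minimal[OF h X G_flow_Hausdorff[OF Y(1)] Y(2)] .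
  ultimately show ?thesis
    using h X(1) Y(1) continuous_imp_homeomorphic_map
    unfolding G_iso_def G_map_def G_flow_def by blast
qed

section \<open>The type space\<close>

locale type_space =
  fixes M :: "('a, 'f, 'r) struc" and n :: nat and G :: "'a list set"
  assumes struc: "is_struc M" and G_definable: "definable M n G"
begin

abbreviation "S \<equiv> SG M n G"
abbreviation "T \<equiv> SG_top M n G"
abbreviation "Mn \<equiv> tuples M n"
abbreviation "Def \<equiv> definable M n"

lemma Def_tuples: "Def Mn"
  using definable_tuples[OF struc] .

lemma Def_compl: "Def D \<Longrightarrow> Def (Mn - D)"
  using definable_compl[OF struc] .

lemma Def_Int: "Def D \<Longrightarrow> Def E \<Longrightarrow> Def (D \<inter> E)"
  using definable_Int[OF struc] .

lemma Def_Un: "Def D \<Longrightarrow> Def E \<Longrightarrow> Def (D \<union> E)"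
  using definable_Un[OF struc] .

lemma G_subset_tuples: "G \<subseteq> Mn"
  using definable_subset_tuples[OF G_definable] .

lemma
  assumes "p \<in> S"
  shows type_definable: "D \<in> p \<Longrightarrow> Def D"
    and type_tuples: "Mn \<in> p"
    and type_G: "G \<in> p"
    and type_nonempty: "{} \<notin> p"
    and type_Int: "D \<in> p \<Longrightarrow> E \<in> p \<Longrightarrow> D \<inter> E \<in> p"
    and type_mono: "D \<in> p \<Longrightarrow> Def E \<Longrightarrow> D \<subseteq> E \<Longrightarrow> E \<in> p"
    and type_complete: "Def D \<Longrightarrow> D \<in> p \<or> Mn - D \<in> p"
  using assms by (auto simp: SG_def is_type_def)

lemma type_compl: "p \<in> S \<Longrightarrow> Def D \<Longrightarrow> Mn - D \<in> p \<longleftrightarrow> D \<notin> p"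
  using type_complete type_Int type_nonempty by (metis Diff_disjoint)

lemma type_Un: "p \<in> S \<Longrightarrow> Def D \<Longrightarrow> Def E \<Longrightarrow> D \<union> E \<in> p \<longleftrightarrow> D \<in> p \<or> E \<in> p"
proof
  assume p: "p \<in> S" "Def D" "Def E" "D \<union> E \<in> p"
  show "D \<in> p \<or> E \<in> p"
  proof (rule ccontr)
    assume "\<not> (D \<in> p \<or> E \<in> p)"
    then have "(D \<union> E) \<inter> ((Mn - D) \<inter> (Mn - E)) \<in> p" using type_compl type_Int p by simp
    moreover have "(D \<union> E) \<inter> ((Mn - D) \<inter> (Mn - E)) = {}" by auto
    ultimately show False using type_nonempty p by auto
  qed
qed (use type_mono Def_Un in blast)

lemma type_G_Int: "p \<in> S \<Longrightarrow> Def D \<Longrightarrow> G \<inter> D \<in> p \<longleftrightarrow> D \<in> p"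
  using type_Int type_G type_mono by (metis Int_lower2)

lemma type_finite_Inter: "finite Q \<Longrightarrow> p \<in> S \<Longrightarrow> Q \<subseteq> p \<Longrightarrow> Mn \<inter> \<Inter>Q \<in> p"
proof (induction Q rule: finite_induct)
  case (insert D Q)
  then have "D \<inter> (Mn \<inter> \<Inter>Q) \<in> p" using type_Int by simp
  then show ?case by (simp add: Int_ac)
qed (simp add: type_tuples)

lemma type_eqI:
  assumes "p \<in> S" "q \<in> S" "\<And>D. D \<in> p \<Longrightarrow> D \<in> q" shows "p = q"
  using assms type_compl type_definable Def_compl by blast

lemma types_separated:
  assumes "p \<in> S" "q \<in> S" "p \<noteq> q" obtains D where "Def D" "D \<in> p" "D \<notin> q"
  using assms type_eqI type_definable by blast

definition basic :: "'a list set \<Rightarrow> 'a list set set set" where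
  "basic D = {p \<in> S. D \<in> p}"

lemma basic_tuples: "basic Mn = S"
  using type_tuples by (auto simp: basic_def)

lemma basic_compl: "Def D \<Longrightarrow> S - basic D = basic (Mn - D)"
  using type_compl by (auto simp: basic_def)

lemma basic_Un: "Def D \<Longrightarrow> Def E \<Longrightarrow> basic (D \<union> E) = basic D \<union> basic E"
  using type_Un by (auto simp: basic_def)

lemma basic_Int: "Def D \<Longrightarrow> Def E \<Longrightarrow> basic (D \<inter> E) = basic D \<inter> basic E"
  using type_Int type_mono by (auto simp: basic_def)

lemma topspace_T: "topspace T = S"
proof -
  have "\<Union>{{p \<in> S. D \<in> p} | D. Def D} = S"
    using basic_tuples Def_tuples unfolding basic_def by blast
  then show ?thesis unfolding SG_top_def by simp
qed

lemma openin_basic: "Def D \<Longrightarrow> openin T (basic D)"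
  unfolding SG_top_def basic_def by (rule topology_generated_by_Basis) blast

lemma openin_basic_nbhd:
  assumes "openin T U" "p \<in> U" obtains D where "Def D" "p \<in> basic D" "basic D \<subseteq> U"
proof -
  have "generate_topology_on {{p \<in> S. D \<in> p} | D. Def D} U"
    using assms(1) openin_topology_generated_by unfolding SG_top_def by blast
  then have nbhd: "\<forall>p\<in>U. \<exists>D. Def D \<and> p \<in> basic D \<and> basic D \<subseteq> U"
  proof induction
    case (Int U V)
    show ?case
    proof
      fix p assume "p \<in> U \<inter> V"
      then obtain D E where "Def D" "p \<in> basic D" "basic D \<subseteq> U" "Def E" "p \<in> basic E" "basic E \<subseteq> V"
        using Int.IH by blast
      then show "\<exists>D. Def D \<and> p \<in> basic D \<and> basic D \<subseteq> U \<inter> V"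
        using Def_Int basic_Int by (intro exI[of _ "D \<inter> E"]) auto
    qed
  next
    case (UN K)
    then show ?case by blast
  qed (auto simp: basic_def)
  show thesis using nbhd assms(2) that by blast
qed

lemma Hausdorff_T: "Hausdorff_space T"
  unfolding Hausdorff_space_def topspace_T
proof (intro allI impI)
  fix p q assume pq: "p \<in> S \<and> q \<in> S \<and> p \<noteq> q"
  then obtain D where D: "Def D" "D \<in> p" "D \<notin> q" using types_separated by blast
  show "\<exists>U V. openin T U \<and> openin T V \<and> p \<in> U \<and> q \<in> V \<and> disjnt U V"
  proof (intro exI conjI)
    show "openin T (basic D)" "openin T (basic (Mn - D))" using D openin_basic Def_compl by auto
    show "p \<in> basic D" "q \<in> basic (Mn - D)" using D pq type_compl by (auto simp: basic_def)
    show "disjnt (basic D) (basic (Mn - D))"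
      using basic_compl[OF D(1)] by (auto simp: disjnt_def basic_def)
  qed
qed

definition fip :: "'a list set set \<Rightarrow> bool" where
  "fip Q \<longleftrightarrow> (\<forall>Q0. finite Q0 \<and> Q0 \<subseteq> Q \<longrightarrow> Mn \<inter> \<Inter>Q0 \<noteq> {})"

lemma fip_insert:
  assumes "\<And>Q0. finite Q0 \<Longrightarrow> Q0 \<subseteq> Q \<Longrightarrow> Mn \<inter> \<Inter>Q0 \<inter> X \<noteq> {}"
  shows "fip (insert X Q)"
  unfolding fip_def
proof (intro allI impI)
  fix Q0 assume "finite Q0 \<and> Q0 \<subseteq> insert X Q"
  then have "Mn \<inter> \<Inter>(Q0 - {X}) \<inter> X \<noteq> {}" using assms[of "Q0 - {X}"] by blast
  then show "Mn \<inter> \<Inter>Q0 \<noteq> {}" by blast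
qed

lemma maximal_fip_is_type:
  assumes Q: "Q \<subseteq> {D. Def D}" "fip Q" and max: "\<And>D. Def D \<Longrightarrow> fip (insert D Q) \<Longrightarrow> D \<in> Q"
  shows "is_type M n Q"
proof -
  have fipQ: "Mn \<inter> \<Inter>Q0 \<noteq> {}" if "finite Q0" "Q0 \<subseteq> Q" for Q0
    using Q(2) that unfolding fip_def by blast
  have "Mn \<in> Q"
    by (rule max[OF Def_tuples], rule fip_insert) (use fipQ in blast)
  moreover have "{} \<notin> Q" using fipQ[of "{{}}"] by auto
  moreover have "D \<inter> E \<in> Q" if "D \<in> Q" "E \<in> Q" for D E
  proof (rule max)
    show "Def (D \<inter> E)" using that Q(1) Def_Int by blast
    show "fip (insert (D \<inter> E) Q)"
    proof (rule fip_insert)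
      fix Q0 assume "finite Q0" "Q0 \<subseteq> Q"
      then have "Mn \<inter> \<Inter>(insert D (insert E Q0)) \<noteq> {}"
        using fipQ[of "insert D (insert E Q0)"] that by simp
      then show "Mn \<inter> \<Inter>Q0 \<inter> (D \<inter> E) \<noteq> {}" by (simp add: Int_ac)
    qed
  qed
  moreover have "E \<in> Q" if "D \<in> Q" "Def E" "D \<subseteq> E" for D E
  proof (rule max[OF that(2)], rule fip_insert)
    fix Q0 assume "finite Q0" "Q0 \<subseteq> Q"
    then have "Mn \<inter> \<Inter>(insert D Q0) \<noteq> {}" using fipQ[of "insert D Q0"] that(1) by simp
    then show "Mn \<inter> \<Inter>Q0 \<inter> E \<noteq> {}" using that(3) by blast
  qed
  moreover have "D \<in> Q \<or> Mn - D \<in> Q" if D: "Def D" for D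
  proof (rule ccontr)
    assume "\<not> (D \<in> Q \<or> Mn - D \<in> Q)"
    then have "\<not> fip (insert D Q)" "\<not> fip (insert (Mn - D) Q)"
      using max D Def_compl by blast+
    then obtain Q1 Q2 where "finite Q1" "Q1 \<subseteq> Q" "Mn \<inter> \<Inter>Q1 \<inter> D = {}"
      "finite Q2" "Q2 \<subseteq> Q" "Mn \<inter> \<Inter>Q2 \<inter> (Mn - D) = {}"
      using fip_insert by metis
    then have "finite (Q1 \<union> Q2)" "Q1 \<union> Q2 \<subseteq> Q" "Mn \<inter> \<Inter>(Q1 \<union> Q2) = {}" by blast+
    then show False using fipQ by blast
  qed
  ultimately show ?thesis using Q(1) unfolding is_type_def by blast
qed

lemma fip_imp_type:
  assumes F: "F \<subseteq> {D. Def D}" "G \<in> F" "fip F"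
  obtains p where "p \<in> S" "F \<subseteq> p"
proof -
  define A where "A = {Q. F \<subseteq> Q \<and> Q \<subseteq> {D. Def D} \<and> fip Q}"
  have "\<Union>C \<in> A" if C: "C \<noteq> {}" "subset.chain A C" for C
  proof -
    have CA: "C \<subseteq> A" using C(2) by (simp add: subset.chain_def)
    have "fip (\<Union>C)" unfolding fip_def
    proof (intro allI impI)
      fix Q0 assume Q0: "finite Q0 \<and> Q0 \<subseteq> \<Union>C"
      then obtain B where "B \<in> C" "Q0 \<subseteq> B" using finite_subset_Union_chain[OF _ _ C] by blast
      then show "Mn \<inter> \<Inter>Q0 \<noteq> {}" using CA Q0 unfolding A_def fip_def by blast
    qed
    then show ?thesis using CA C(1) unfolding A_def by blast
  qed
  moreover have "A \<noteq> {}" using F unfolding A_def by blast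
  ultimately obtain Q where Q: "Q \<in> A" and maxQ: "\<And>X. X \<in> A \<Longrightarrow> Q \<subseteq> X \<Longrightarrow> X = Q"
    using subset_Zorn_nonempty[of A] by blast
  have "is_type M n Q"
  proof (rule maximal_fip_is_type)
    show "Q \<subseteq> {D. Def D}" "fip Q" using Q unfolding A_def by auto
    show "D \<in> Q" if "Def D" "fip (insert D Q)" for D
      using that Q maxQ[of "insert D Q"] unfolding A_def by blast
  qed
  then show ?thesis using that Q F(2) unfolding A_def SG_def by blast
qed

text \<open>The finite-intersection form of compactness of \<open>T\<close>.\<close>
lemma type_avoiding:
  assumes Def_\<D>: "\<D> \<subseteq> {D. Def D}"
    and nocover: "\<And>\<D>0. finite \<D>0 \<Longrightarrow> \<D>0 \<subseteq> \<D> \<Longrightarrow> \<not> S \<subseteq> \<Union>(basic ` \<D>0)"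
  obtains p where "p \<in> S" "\<And>D. D \<in> \<D> \<Longrightarrow> D \<notin> p"
proof -
  define F where "F = insert G ((\<lambda>D. Mn - D) ` \<D>)"
  have "Mn \<inter> \<Inter>Q0 \<noteq> {}" if Q0: "finite Q0" "Q0 \<subseteq> F" for Q0
  proof -
    have "finite (Q0 - {G})" "Q0 - {G} \<subseteq> (\<lambda>D. Mn - D) ` \<D>" using Q0 unfolding F_def by auto
    from finite_subset_image[OF this]
    obtain \<D>0 where \<D>0: "\<D>0 \<subseteq> \<D>" "finite \<D>0" "Q0 - {G} = (\<lambda>D. Mn - D) ` \<D>0" by blast
    obtain p where p: "p \<in> S" "p \<notin> \<Union>(basic ` \<D>0)" using nocover[OF \<D>0(2,1)] by blast
    have compl_in_p: "Mn - D \<in> p" if "D \<in> \<D>0" for D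
    proof -
      have "Def D" using that \<D>0(1) Def_\<D> by blast
      moreover have "D \<notin> p" using p that by (simp add: basic_def)
      ultimately show ?thesis using type_compl[OF p(1)] by simp
    qed
    have "Q0 \<subseteq> p"
    proof
      fix X assume "X \<in> Q0"
      then have "X = G \<or> X \<in> (\<lambda>D. Mn - D) ` \<D>0" using \<D>0(3) by blast
      then show "X \<in> p" using type_G[OF p(1)] compl_in_p by blast
    qed
    then have "Mn \<inter> \<Inter>Q0 \<in> p" using type_finite_Inter[OF Q0(1) p(1)] by blast
    then show ?thesis using type_nonempty[OF p(1)] by (intro notI) simp
  qed
  then have "fip F" unfolding fip_def by blast
  moreover have "F \<subseteq> {D. Def D}" using G_definable Def_compl Def_\<D> unfolding F_def by blast
  ultimately obtain p where p: "p \<in> S" "F \<subseteq> p"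
    using fip_imp_type[of F] unfolding F_def by blast
  show thesis
  proof (rule that[OF p(1)])
    fix D assume D: "D \<in> \<D>"
    then have "Mn - D \<in> p" using p(2) unfolding F_def by blast
    moreover have "Def D" using D Def_\<D> by blast
    ultimately show "D \<notin> p" using type_compl[OF p(1)] by simp
  qed
qed

lemma compact_T: "compact_space T"
  unfolding compact_space_alt topspace_T
proof (intro allI impI)
  fix \<U> assume \<U>: "(\<forall>U\<in>\<U>. openin T U) \<and> S \<subseteq> \<Union>\<U>"
  show "\<exists>\<F>. finite \<F> \<and> \<F> \<subseteq> \<U> \<and> S \<subseteq> \<Union>\<F>"
  proof (rule ccontr)
    assume nofin: "\<nexists>\<F>. finite \<F> \<and> \<F> \<subseteq> \<U> \<and> S \<subseteq> \<Union>\<F>"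
    define \<D> where "\<D> = {D. Def D \<and> (\<exists>U\<in>\<U>. basic D \<subseteq> U)}"
    have "\<forall>D\<in>\<D>. \<exists>U. U \<in> \<U> \<and> basic D \<subseteq> U" unfolding \<D>_def by blast
    then obtain u where u: "\<forall>D\<in>\<D>. u D \<in> \<U> \<and> basic D \<subseteq> u D"
      using bchoice[of \<D> "\<lambda>D U. U \<in> \<U> \<and> basic D \<subseteq> U"] by blast
    have nocover: "\<not> S \<subseteq> \<Union>(basic ` \<D>0)" if "finite \<D>0" "\<D>0 \<subseteq> \<D>" for \<D>0
    proof
      assume "S \<subseteq> \<Union>(basic ` \<D>0)"
      then have "S \<subseteq> \<Union>(u ` \<D>0)" using u that(2) by blast
      moreover have "finite (u ` \<D>0)" "u ` \<D>0 \<subseteq> \<U>" using u that by auto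
      ultimately show False using nofin by blast
    qed
    have "\<D> \<subseteq> {D. Def D}" unfolding \<D>_def by blast
    then obtain p where p: "p \<in> S" "\<And>D. D \<in> \<D> \<Longrightarrow> D \<notin> p"
      using type_avoiding nocover by blast
    then obtain U where U: "U \<in> \<U>" "p \<in> U" using \<U> by blast
    then obtain D where D: "Def D" "p \<in> basic D" "basic D \<subseteq> U"
      using openin_basic_nbhd[of U p] \<U> by blast
    then have "D \<in> \<D>" using U(1) unfolding \<D>_def by blast
    then show False using p D(2) by (simp add: basic_def)
  qed
qed

lemma compactin_basic_cover:
  assumes C: "compactin T C" and cover: "\<And>q. q \<in> C \<Longrightarrow> \<exists>D. Def D \<and> P D \<and> q \<in> basic D"
    and P: "P {}" "\<And>D E. Def D \<Longrightarrow> Def E \<Longrightarrow> P D \<Longrightarrow> P E \<Longrightarrow> P (D \<union> E)"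
  obtains E where "Def E" "P E" "C \<subseteq> basic E"
proof -
  define \<B> where "\<B> = basic ` {D. Def D \<and> P D}"
  have cover_\<B>: "C \<subseteq> \<Union>\<B>"
  proof
    fix q assume "q \<in> C"
    then obtain D where "Def D" "P D" "q \<in> basic D" using cover by blast
    then show "q \<in> \<Union>\<B>" unfolding \<B>_def by blast
  qed
  have open_\<B>: "openin T U" if "U \<in> \<B>" for U
    using that openin_basic unfolding \<B>_def by blast
  obtain \<F> where \<F>: "finite \<F>" "\<F> \<subseteq> \<B>" "C \<subseteq> \<Union>\<F>"
    using compactinD[OF C open_\<B> cover_\<B>] by blast
  have "\<exists>E. Def E \<and> P E \<and> \<Union>\<F> \<subseteq> basic E"
    using \<F>(1,2)
  proof (induction \<F> rule: finite_induct)
    case empty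
    show ?case using P(1) definable_empty[OF struc] by (intro exI[of _ "{}"]) simp
  next
    case (insert X \<F>)
    have "\<F> \<subseteq> \<B>" "X \<in> \<B>" using insert.prems by simp_all
    obtain E where E: "Def E" "P E" "\<Union>\<F> \<subseteq> basic E"
      using insert.IH[OF \<open>\<F> \<subseteq> \<B>\<close>] by auto
    obtain D where D: "X = basic D" "Def D" "P D" using \<open>X \<in> \<B>\<close> unfolding \<B>_def by auto
    have "basic (D \<union> E) = X \<union> basic E" using basic_Un[OF D(2) E(1)] D(1) by simp
    then have "\<Union>(insert X \<F>) \<subseteq> basic (D \<union> E)" using E(3) by auto
    then show ?case using Def_Un[OF D(2) E(1)] P(2)[OF D(2) E(1) D(3) E(2)]
      by (intro exI[of _ "D \<union> E"]) simp
  qed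
  then obtain E where E: "Def E" "P E" "\<Union>\<F> \<subseteq> basic E" by auto
  from \<F>(3) E(3) have "C \<subseteq> basic E" by (rule order_trans)
  then show thesis by (rule that[OF E(1,2)])
qed

lemma closedin_separation:
  assumes C1: "closedin T C1" and C2: "closedin T C2" and disj: "C1 \<inter> C2 = {}"
  obtains D where "Def D" "C1 \<subseteq> basic D" "basic D \<inter> C2 = {}"
proof -
  have avoid: "\<exists>E. Def E \<and> E \<notin> p \<and> C2 \<subseteq> basic E" if p: "p \<in> S" "p \<notin> C2" for p
  proof (rule compactin_basic_cover[OF closedin_compact_space[OF compact_T C2]])
    fix q assume "q \<in> C2"
    then have "q \<in> S" "q \<noteq> p" using closedin_subset[OF C2] p topspace_T by auto
    then obtain D where "Def D" "D \<in> q" "D \<notin> p" using types_separated p(1) by metis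
    then show "\<exists>D. Def D \<and> D \<notin> p \<and> q \<in> basic D" using \<open>q \<in> S\<close> by (auto simp: basic_def)
  qed (use type_nonempty p type_Un in auto)
  show ?thesis
  proof (rule compactin_basic_cover[OF closedin_compact_space[OF compact_T C1]])
    fix p assume "p \<in> C1"
    then have p: "p \<in> S" "p \<notin> C2" using closedin_subset[OF C1] disj topspace_T by auto
    then obtain E where E: "Def E" "E \<notin> p" "C2 \<subseteq> basic E" using avoid by blast
    then have "p \<in> basic (Mn - E)" "basic (Mn - E) \<inter> C2 = {}"
      using p type_compl by (auto simp: basic_def)
    then show "\<exists>D. Def D \<and> basic D \<inter> C2 = {} \<and> p \<in> basic D" using Def_compl[OF E(1)] by blast
  qed (use that basic_Un type_nonempty in \<open>auto simp: basic_def\<close>)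
qed

definition tp :: "'a list \<Rightarrow> 'a list set set" where
  "tp g = {D. Def D \<and> g \<in> D}"

lemma tp_in_S: "g \<in> G \<Longrightarrow> tp g \<in> S"
  using G_subset_tuples G_definable Def_tuples Def_Int Def_compl
  unfolding SG_def is_type_def tp_def by auto

lemma realized_types_dense: "T closure_of (tp ` G) = S"
proof -
  have "\<exists>g\<in>G. tp g \<in> U" if U: "openin T U" "p \<in> U" for U p
  proof -
    obtain D where D: "Def D" "p \<in> basic D" "basic D \<subseteq> U" using openin_basic_nbhd[OF U] by blast
    then have p: "p \<in> S" "G \<inter> D \<in> p" using type_G_Int by (auto simp: basic_def)
    then have "G \<inter> D \<noteq> {}" using type_nonempty by metis
    then obtain g where g: "g \<in> G \<inter> D" by blast
    then have "tp g \<in> basic D" using tp_in_S D(1) by (auto simp: basic_def tp_def)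
    then show ?thesis using D(3) g by blast
  qed
  then show ?thesis unfolding closure_of_def topspace_T by auto
qed

end

section \<open>Translates of definable sets\<close>

lemma map_nth_swap_blocks:
  assumes "length a = n" "length g = n" "length z = n"
  shows "map (\<lambda>i. (a @ g @ z) ! (if i < n then n + i else if i < 2 * n then i - n else i)) [0..<3 * n]
    = g @ a @ z" (is "map ?f _ = _")
proof (rule nth_equalityI)
  fix i assume "i < length (map ?f [0..<3 * n])"
  then have i: "i < 3 * n" and "map ?f [0..<3 * n] ! i = ?f i" by simp_all
  moreover consider "i < n" | "n \<le> i" "i < 2 * n" | "2 * n \<le> i" by linarith
  then have "?f i = (g @ a @ z) ! i"
  proof cases
    case 1 then show ?thesis using assms by (simp add: nth_append)
  next
    case 2
    then have "i - n < n" by simp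
    then show ?thesis using assms 2 by (simp add: nth_append)
  next
    case 3
    then have "i - n - n = i - 2 * n" "\<not> i - n < n" by simp_all
    then show ?thesis using assms 3 by (simp add: nth_append)
  qed
  ultimately show "map ?f [0..<3 * n] ! i = (g @ a @ z) ! i" by simp
qed (simp add: assms)

lemma map_nth_shift: "length w = k + m \<Longrightarrow> map (\<lambda>i. w ! (k + i)) [0..<m] = drop k w"
  by (rule nth_equalityI) simp_all

locale definable_group =
  fixes M :: "('a, 'f, 'r) struc" and n :: nat and Gr :: "('a list, 'b) monoid_scheme"
  assumes M_struc: "is_struc M" and group: "group Gr"
    and carrier_definable: "definable M n (carrier Gr)"
    and graph_definable:
      "definable M (3 * n) {x @ y @ z | x y z. x \<in> carrier Gr \<and> y \<in> carrier Gr \<and> z = x \<otimes>\<^bsub>Gr\<^esub> y}"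
begin

sublocale type_space M n "carrier Gr"
  using M_struc carrier_definable by unfold_locales

abbreviation "G \<equiv> carrier Gr"
abbreviation "act \<equiv> type_act M n Gr"

lemma length_G: "g \<in> G \<Longrightarrow> length g = n"
  using G_subset_tuples by (auto simp: tuples_def)

lemma mult_closed: "g \<in> G \<Longrightarrow> a \<in> G \<Longrightarrow> g \<otimes>\<^bsub>Gr\<^esub> a \<in> G"
  using group by (simp add: group.is_monoid monoid.m_closed)

lemma mem_graph:
  assumes "length g = n" "length a = n"
  shows "g @ a @ z \<in> {x @ y @ z | x y z. x \<in> G \<and> y \<in> G \<and> z = x \<otimes>\<^bsub>Gr\<^esub> y}
    \<longleftrightarrow> g \<in> G \<and> a \<in> G \<and> z = g \<otimes>\<^bsub>Gr\<^esub> a"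
proof
  assume "g @ a @ z \<in> {x @ y @ z | x y z. x \<in> G \<and> y \<in> G \<and> z = x \<otimes>\<^bsub>Gr\<^esub> y}"
  then obtain x y where xy: "x \<in> G" "y \<in> G" "g @ a @ z = x @ y @ (x \<otimes>\<^bsub>Gr\<^esub> y)" by blast
  then have "x = g" "a @ z = y @ (x \<otimes>\<^bsub>Gr\<^esub> y)"
    using length_G[OF xy(1)] assms(1) by (simp_all add: append_eq_append_conv)
  moreover then have "y = a" "z = x \<otimes>\<^bsub>Gr\<^esub> y"
    using length_G[OF xy(2)] assms(2) by (simp_all add: append_eq_append_conv)
  ultimately show "g \<in> G \<and> a \<in> G \<and> z = g \<otimes>\<^bsub>Gr\<^esub> a" using xy by simp
qed blast

lemma mem_translation_relation:
  assumes "length a = n"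
  shows "a @ g \<in> {a @ g | a g. a \<in> G \<and> g \<in> G \<and> g \<otimes>\<^bsub>Gr\<^esub> a \<in> D}
    \<longleftrightarrow> a \<in> G \<and> g \<in> G \<and> g \<otimes>\<^bsub>Gr\<^esub> a \<in> D"
proof
  assume "a @ g \<in> {a @ g | a g. a \<in> G \<and> g \<in> G \<and> g \<otimes>\<^bsub>Gr\<^esub> a \<in> D}"
  then obtain a' g' where a'g': "a' \<in> G" "g' \<in> G" "g' \<otimes>\<^bsub>Gr\<^esub> a' \<in> D" "a @ g = a' @ g'" by blast
  then have "a' = a" "g' = g" using length_G[OF a'g'(1)] assms by (simp_all add: append_eq_append_conv)
  then show "a \<in> G \<and> g \<in> G \<and> g \<otimes>\<^bsub>Gr\<^esub> a \<in> D" using a'g' by simp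
qed blast

text \<open>The tuples \<open>a g z\<close> with \<open>g a = z \<in> D\<close>, cut out of \<open>M^(3n)\<close> through the graph of
multiplication with the first two blocks of coordinates swapped.\<close>
definition translation_witnesses :: "'a list set \<Rightarrow> 'a list set" where
  "translation_witnesses D =
     {w \<in> tuples M (3 * n). map (\<lambda>i. w ! (if i < n then n + i else if i < 2 * n then i - n else i)) [0..<3 * n]
        \<in> {x @ y @ z | x y z. x \<in> G \<and> y \<in> G \<and> z = x \<otimes>\<^bsub>Gr\<^esub> y}}
   \<inter> {w \<in> tuples M (3 * n). map (\<lambda>i. w ! (2 * n + i)) [0..<n] \<in> D}"

lemma mem_translation_witnesses:
  assumes "a \<in> Mn" "g \<in> Mn" "z \<in> Mn"
  shows "a @ g @ z \<in> translation_witnesses D \<longleftrightarrow> a \<in> G \<and> g \<in> G \<and> z = g \<otimes>\<^bsub>Gr\<^esub> a \<and> z \<in> D"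
proof -
  have len: "length a = n" "length g = n" "length z = n" using assms by (simp_all add: tuples_def)
  have "map (\<lambda>i. (a @ g @ z) ! (if i < n then n + i else if i < 2 * n then i - n else i)) [0..<3 * n]
      = g @ a @ z"
    using map_nth_swap_blocks[OF len] .
  moreover have "map (\<lambda>i. (a @ g @ z) ! (2 * n + i)) [0..<n] = z"
    using map_nth_shift[of "a @ g @ z" "2 * n" n] len by simp
  moreover have "a @ g @ z \<in> tuples M (3 * n)" using assms by (auto simp: tuples_def)
  ultimately show ?thesis unfolding translation_witnesses_def using mem_graph[OF len(2,1)] by auto
qed

lemma definable_translation_witnesses:
  assumes D: "Def D" shows "definable M (2 * n + n) (translation_witnesses D)"
proof -
  define \<sigma> where "\<sigma> i = (if i < n then n + i else if i < 2 * n then i - n else i)" for i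
  have "inj_on \<sigma> {..<3 * n}" "\<sigma> ` {..<3 * n} \<subseteq> {..<3 * n}"
    unfolding \<sigma>_def inj_on_def by auto
  then have "definable M (3 * n) {w \<in> tuples M (3 * n). map (\<lambda>i. w ! \<sigma> i) [0..<3 * n]
      \<in> {x @ y @ z | x y z. x \<in> G \<and> y \<in> G \<and> z = x \<otimes>\<^bsub>Gr\<^esub> y}}"
    using definable_preimage_coords[OF struc graph_definable] by blast
  moreover have "definable M (3 * n) {w \<in> tuples M (3 * n). map (\<lambda>i. w ! (2 * n + i)) [0..<n] \<in> D}"
    by (rule definable_preimage_coords[OF struc D]) (auto simp: inj_on_def)
  ultimately show ?thesis
    unfolding translation_witnesses_def \<sigma>_def[abs_def] using definable_Int[OF struc]
    by (simp add: algebra_simps)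
qed

text \<open>The relation \<open>g a \<in> D\<close>, with the variables of \<open>a\<close> first so that
the sets \<open>{a. g a \<in> D}\<close> are its fibres over the parameter \<open>g\<close>.\<close>
lemma definable_translation_relation:
  assumes D: "Def D"
  shows "definable M (2 * n) {a @ g | a g. a \<in> G \<and> g \<in> G \<and> g \<otimes>\<^bsub>Gr\<^esub> a \<in> D}"
proof -
  define P where "P = translation_witnesses D"
  have P: "definable M (2 * n + n) P" using definable_translation_witnesses[OF D] by (simp add: P_def)
  have mem_P: "a @ g @ z \<in> P \<longleftrightarrow> a \<in> G \<and> g \<in> G \<and> z = g \<otimes>\<^bsub>Gr\<^esub> a \<and> z \<in> D"
    if "a \<in> Mn" "g \<in> Mn" "z \<in> Mn" for a g z
    using mem_translation_witnesses[OF that] by (simp add: P_def)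
  from P have proj: "definable M (2 * n) {v \<in> tuples M (2 * n). \<exists>z\<in>Mn. v @ z \<in> P}"
    by (rule definable_projection[OF struc])
  have "{v \<in> tuples M (2 * n). \<exists>z\<in>Mn. v @ z \<in> P} \<subseteq> {a @ g | a g. a \<in> G \<and> g \<in> G \<and> g \<otimes>\<^bsub>Gr\<^esub> a \<in> D}"
  proof
    fix v assume "v \<in> {v \<in> tuples M (2 * n). \<exists>z\<in>Mn. v @ z \<in> P}"
    then obtain z where v: "v \<in> tuples M (2 * n)" "z \<in> Mn" "v @ z \<in> P" by blast
    define a g where "a = take n v" and "g = drop n v"
    have "a \<in> Mn" "g \<in> Mn" "v = a @ g" using v(1)
      by (auto simp: a_def g_def tuples_def dest: in_set_takeD in_set_dropD)
    then show "v \<in> {a @ g | a g. a \<in> G \<and> g \<in> G \<and> g \<otimes>\<^bsub>Gr\<^esub> a \<in> D}" using mem_P v(2,3) by auto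
  qed
  moreover have "{a @ g | a g. a \<in> G \<and> g \<in> G \<and> g \<otimes>\<^bsub>Gr\<^esub> a \<in> D} \<subseteq> {v \<in> tuples M (2 * n). \<exists>z\<in>Mn. v @ z \<in> P}"
  proof
    fix v assume "v \<in> {a @ g | a g. a \<in> G \<and> g \<in> G \<and> g \<otimes>\<^bsub>Gr\<^esub> a \<in> D}"
    then obtain a g where ag: "v = a @ g" "a \<in> G" "g \<in> G" "g \<otimes>\<^bsub>Gr\<^esub> a \<in> D" by blast
    then have "a \<in> Mn" "g \<in> Mn" "g \<otimes>\<^bsub>Gr\<^esub> a \<in> Mn" using G_subset_tuples mult_closed by auto
    then show "v \<in> {v \<in> tuples M (2 * n). \<exists>z\<in>Mn. v @ z \<in> P}" using mem_P ag by (auto simp: tuples_def)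
  qed
  ultimately have "{v \<in> tuples M (2 * n). \<exists>z\<in>Mn. v @ z \<in> P} = {a @ g | a g. a \<in> G \<and> g \<in> G \<and> g \<otimes>\<^bsub>Gr\<^esub> a \<in> D}" by (rule equalityI)
  then show ?thesis using proj by simp
qed

definition translate :: "'a list \<Rightarrow> 'a list set \<Rightarrow> 'a list set" where
  "translate g D = {a \<in> G. g \<otimes>\<^bsub>Gr\<^esub> a \<in> D}"

lemma translate_as_fiber:
  "g \<in> G \<Longrightarrow> translate g D = {a \<in> Mn. a @ g \<in> {a @ g | a g. a \<in> G \<and> g \<in> G \<and> g \<otimes>\<^bsub>Gr\<^esub> a \<in> D}}"
  using G_subset_tuples mem_translation_relation by (auto simp: translate_def tuples_def)

lemma Def_translate:
  assumes "g \<in> G" "Def D" shows "Def (translate g D)"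
proof -
  have "definable M (n + n) {a @ g | a g. a \<in> G \<and> g \<in> G \<and> g \<otimes>\<^bsub>Gr\<^esub> a \<in> D}"
    using definable_translation_relation[OF assms(2)] by (simp add: mult_2)
  moreover have "g \<in> Mn" using assms(1) G_subset_tuples by blast
  ultimately show ?thesis unfolding translate_as_fiber[OF assms(1)] by (rule definable_fiber)
qed

text \<open>This is where definability of types is used: \<open>translate g D \<in> p\<close> says \<open>D \<in> g p\<close>.\<close>
lemma Def_translate_in_type:
  assumes p: "definable_type M n p" and D: "Def D"
  shows "Def {g \<in> G. translate g D \<in> p}"
proof -
  obtain \<phi> c where c: "set c \<subseteq> dom M" "fv \<phi> \<subseteq> {..<n + n + length c}"
    and W: "{a @ g | a g. a \<in> G \<and> g \<in> G \<and> g \<otimes>\<^bsub>Gr\<^esub> a \<in> D} = defset M (n + n) \<phi> c"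
    using definable_translation_relation[OF D] unfolding definable_def mult_2 by blast
  define V where "V = {b \<in> tuples M (n + length c). defset M n \<phi> b \<in> p}"
  have "translate g D = defset M n \<phi> (g @ c)" if "g \<in> G" for g
  proof -
    have "g \<in> Mn" using that G_subset_tuples by blast
    then show ?thesis
      unfolding translate_as_fiber[OF that] W by (rule defset_append_params)
  qed
  then have "{g \<in> G. translate g D \<in> p} = G \<inter> {g \<in> Mn. g @ c \<in> V}"
    using G_subset_tuples c(1) by (auto simp: V_def tuples_def)
  moreover have "Def {g \<in> Mn. g @ c \<in> V}"
  proof (rule definable_fiber)
    show "definable M (n + length c) V"
      using p c(2) unfolding V_def definable_type_def by (simp add: add.assoc)
    show "c \<in> tuples M (length c)" using c(1) by (simp add: tuples_def)
  qed
  ultimately show ?thesis using Def_Int G_definable by simp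
qed

section \<open>The action on types\<close>

lemma mem_act: "D \<in> act g p \<longleftrightarrow> Def D \<and> translate g D \<in> p"
  by (simp add: type_act_def translate_def)

lemma translate_Int: "translate g (D \<inter> E) = translate g D \<inter> translate g E"
  by (auto simp: translate_def)

lemma translate_mono: "D \<subseteq> E \<Longrightarrow> translate g D \<subseteq> translate g E"
  by (auto simp: translate_def)

lemma translate_compl: "g \<in> G \<Longrightarrow> translate g (Mn - D) = G \<inter> (Mn - translate g D)"
  using mult_closed G_subset_tuples by (auto simp: translate_def)

lemma translate_one: "translate \<one>\<^bsub>Gr\<^esub> D = G \<inter> D"
  using group by (auto simp: translate_def group.is_monoid)

lemma translate_translate: "g \<in> G \<Longrightarrow> h \<in> G \<Longrightarrow> translate h (translate g D) = translate (g \<otimes>\<^bsub>Gr\<^esub> h) D"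
  using mult_closed group by (auto simp: translate_def group.is_monoid monoid.m_assoc)

lemma act_in_S: assumes g: "g \<in> G" and p: "p \<in> S" shows "act g p \<in> S"
proof -
  have "translate g Mn = G" "translate g G = G"
    using g mult_closed G_subset_tuples by (auto simp: translate_def)
  then have "Mn \<in> act g p" "G \<in> act g p" using Def_tuples G_definable type_G[OF p] by (auto simp: mem_act)
  moreover have "{} \<notin> act g p" using type_nonempty[OF p] by (simp add: mem_act translate_def)
  moreover have "D \<inter> E \<in> act g p" if "D \<in> act g p" "E \<in> act g p" for D E
    using that type_Int[OF p] Def_Int by (auto simp: mem_act translate_Int)
  moreover have "E \<in> act g p" if "D \<in> act g p" "Def E" "D \<subseteq> E" for D E
    using that type_mono[OF p] translate_mono Def_translate[OF g] by (auto simp: mem_act)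
  moreover have "D \<in> act g p \<or> Mn - D \<in> act g p" if D: "Def D" for D
  proof (cases "translate g D \<in> p")
    case False
    then have "G \<inter> (Mn - translate g D) \<in> p"
      using type_compl[OF p Def_translate[OF g D]] type_Int[OF p type_G[OF p]] by blast
    then show ?thesis using Def_compl[OF D] by (simp add: mem_act translate_compl[OF g])
  qed (use D in \<open>simp add: mem_act\<close>)
  ultimately show ?thesis unfolding SG_def is_type_def by (auto simp: mem_act)
qed

lemma act_continuous: assumes g: "g \<in> G" shows "continuous_map T T (act g)"
proof -
  have "continuous_map T (topology_generated_by {{p \<in> S. D \<in> p} | D. Def D}) (act g)"
  proof (rule continuous_on_generated_topo)
    fix U assume "U \<in> {{p \<in> S. D \<in> p} | D. Def D}"
    then obtain D where D: "Def D" "U = basic D" by (auto simp: basic_def)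
    have "act g -` U \<inter> topspace T = basic (translate g D)"
      using D act_in_S[OF g] by (auto simp: topspace_T basic_def mem_act)
    then show "openin T (act g -` U \<inter> topspace T)" using openin_basic Def_translate[OF g D(1)] by simp
  next
    show "act g ` topspace T \<subseteq> \<Union>{{p \<in> S. D \<in> p} | D. Def D}"
      using act_in_S[OF g] basic_tuples Def_tuples unfolding topspace_T basic_def by blast
  qed
  then show ?thesis unfolding SG_top_def .
qed

lemma act_one: "p \<in> S \<Longrightarrow> act \<one>\<^bsub>Gr\<^esub> p = p"
  using type_G_Int type_definable by (auto simp: mem_act translate_one)

lemma act_mult: "g \<in> G \<Longrightarrow> h \<in> G \<Longrightarrow> act (g \<otimes>\<^bsub>Gr\<^esub> h) p = act g (act h p)"
  using Def_translate by (auto simp: mem_act translate_translate)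

lemma act_inv: assumes "g \<in> G" "p \<in> S" shows "act (inv\<^bsub>Gr\<^esub> g) (act g p) = p"
  using assms act_mult[symmetric] act_one group by (simp add: group.inv_closed group.l_inv)

lemma G_flow_T: "G_flow Gr T act"
  unfolding G_flow_def topspace_T
proof (intro conjI ballI)
  fix g assume g: "g \<in> G"
  have "act (inv\<^bsub>Gr\<^esub> (inv\<^bsub>Gr\<^esub> g)) = act g" using group g by (simp add: group.inv_inv)
  then show "homeomorphic_map T T (act g)"
    unfolding homeomorphic_map_maps homeomorphic_maps_def topspace_T
    using act_continuous act_inv g group group.inv_closed by metis
qed (use compact_T Hausdorff_T act_one act_mult in auto)

end

locale definable_group_definable_types = definable_group +
  assumes types_definable: "\<forall>p \<in> SG M n (carrier Gr). definable_type M n p"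
begin

lemma orbit_map_definable: assumes p: "p \<in> S" shows "definable_map M n G T (\<lambda>g. act g p)"
  unfolding definable_map_def
proof (intro allI impI)
  fix C1 C2 assume "closedin T C1 \<and> closedin T C2 \<and> C1 \<inter> C2 = {}"
  then obtain D where D: "Def D" "C1 \<subseteq> basic D" "basic D \<inter> C2 = {}"
    using closedin_separation by metis
  have "act g p \<in> basic D \<longleftrightarrow> translate g D \<in> p" if "g \<in> G" for g
    using act_in_S[OF that p] D(1) by (simp add: basic_def mem_act)
  then show "\<exists>Y. Def Y \<and> Y \<subseteq> G \<and> {g \<in> G. act g p \<in> C1} \<subseteq> Y \<and> Y \<inter> {g \<in> G. act g p \<in> C2} = {}"
    using Def_translate_in_type types_definable p D by (intro exI[of _ "{g \<in> G. translate g D \<in> p}"]) blast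
qed

lemma def_flow_T: "def_flow M n Gr T act"
  unfolding def_flow_def using G_flow_T orbit_map_definable topspace_T by simp

end

section \<open>Extension of orbit maps to types\<close>

lemma regular_space_closed_nbhd:
  assumes "regular_space X" "openin X W" "x \<in> W"
  obtains U V where "openin X U" "closedin X V" "x \<in> U" "U \<subseteq> V" "V \<subseteq> W"
proof -
  have "neighbourhood_base_of (closedin X) X"
    using assms(1) by (simp add: neighbourhood_base_of_closedin)
  from this[unfolded neighbourhood_base_of, rule_format, OF conjI[OF assms(2,3)]]
  show thesis using that by auto
qed

text \<open>Every point \<open>x0\<close> of a definable flow \<open>X\<close> is the image of the identity
type under a G-map from \<open>T\<close> to \<open>X\<close>: a type \<open>p\<close> is sent to the limit of \<open>g x0\<close> as \<open>g\<close>
tends to \<open>p\<close>.  Definability of the orbit map makes this limit unique.\<close>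
locale definable_flow_point = definable_group M n Gr
  for M :: "('a, 'f, 'r) struc" and n and Gr :: "('a list, 'b) monoid_scheme" +
  fixes X :: "'x topology" and actX :: "'a list \<Rightarrow> 'x \<Rightarrow> 'x" and x0 :: 'x
  assumes def_flow_X: "def_flow M n Gr X actX" and x0: "x0 \<in> topspace X"
begin

lemma G_flow_X: "G_flow Gr X actX"
  using def_flow_X by (simp add: def_flow_def)

lemma regular_X: "regular_space X"
  using G_flow_compact[OF G_flow_X] G_flow_Hausdorff[OF G_flow_X] compact_Hausdorff_imp_regular_space
  by blast

definition orbit :: "'a list \<Rightarrow> 'x" where
  "orbit g = actX g x0"

lemma orbit_topspace: "orbit ` (G \<inter> D) \<subseteq> topspace X"
  using G_flow_act_topspace[OF G_flow_X] x0 by (auto simp: orbit_def)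

lemma orbit_separation:
  assumes "closedin X C1" "closedin X C2" "C1 \<inter> C2 = {}"
  obtains Y where "Def Y" "{g \<in> G. orbit g \<in> C1} \<subseteq> Y" "Y \<inter> {g \<in> G. orbit g \<in> C2} = {}"
proof -
  have "definable_map M n G X orbit"
    using def_flow_X x0 unfolding def_flow_def orbit_def[abs_def] by simp
  from this[unfolded definable_map_def, rule_format, OF conjI[OF assms(1) conjI[OF assms(2,3)]]]
  show thesis using that by auto
qed

definition is_limit :: "'a list set set \<Rightarrow> 'x \<Rightarrow> bool" where
  "is_limit p y \<longleftrightarrow> y \<in> topspace X \<and> (\<forall>D\<in>p. y \<in> X closure_of (orbit ` (G \<inter> D)))"

definition limit :: "'a list set set \<Rightarrow> 'x" where
  "limit p = (THE y. is_limit p y)"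

lemma is_limit_avoid:
  assumes "is_limit p y" "openin X V" "y \<in> V" "V \<inter> orbit ` (G \<inter> D) = {}"
  shows "D \<notin> p"
proof
  assume "D \<in> p"
  then have "y \<in> X closure_of (orbit ` (G \<inter> D))" using assms(1) by (simp add: is_limit_def)
  moreover have "V \<inter> X closure_of (orbit ` (G \<inter> D)) = {}"
    unfolding openin_Int_closure_of_eq_empty[OF assms(2)] using assms(4) .
  ultimately show False using assms(3) by blast
qed

lemma is_limit_unique:
  assumes p: "p \<in> S" and y: "is_limit p y1" "is_limit p y2" shows "y1 = y2"
proof (rule ccontr)
  assume ne: "y1 \<noteq> y2"
  have t1: "y1 \<in> topspace X" and t2: "y2 \<in> topspace X" using y by (simp_all add: is_limit_def)
  from G_flow_Hausdorff[OF G_flow_X, unfolded Hausdorff_space_def, rule_format, OF conjI[OF t1 conjI[OF t2 ne]]]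
  obtain U1 U2 where U: "openin X U1" "openin X U2" "y1 \<in> U1" "y2 \<in> U2" "disjnt U1 U2"
    by auto
  obtain V1 C1 where V1: "openin X V1" "closedin X C1" "y1 \<in> V1" "V1 \<subseteq> C1" "C1 \<subseteq> U1"
    using regular_space_closed_nbhd[OF regular_X U(1,3)] .
  obtain V2 C2 where V2: "openin X V2" "closedin X C2" "y2 \<in> V2" "V2 \<subseteq> C2" "C2 \<subseteq> U2"
    using regular_space_closed_nbhd[OF regular_X U(2,4)] .
  have "C1 \<inter> C2 = {}" using V1(5) V2(5) U(5) by (auto simp: disjnt_def)
  then obtain Y where Y: "Def Y" "{g \<in> G. orbit g \<in> C1} \<subseteq> Y" "Y \<inter> {g \<in> G. orbit g \<in> C2} = {}"
    by (rule orbit_separation[OF V1(2) V2(2)])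
  have "V2 \<inter> orbit ` (G \<inter> Y) = {}"
  proof (intro equals0I)
    fix x assume "x \<in> V2 \<inter> orbit ` (G \<inter> Y)"
    then obtain g where "g \<in> G" "g \<in> Y" "orbit g \<in> C2" using V2(4) by auto
    then show False using Y(3) by auto
  qed
  then have "Y \<notin> p" using is_limit_avoid[OF y(2) V2(1,3)] by simp
  moreover have "V1 \<inter> orbit ` (G \<inter> (Mn - Y)) = {}"
  proof (intro equals0I)
    fix x assume "x \<in> V1 \<inter> orbit ` (G \<inter> (Mn - Y))"
    then obtain g where "g \<in> G" "g \<notin> Y" "orbit g \<in> C1" using V1(4) by auto
    then show False using Y(2) by auto
  qed
  then have "Mn - Y \<notin> p" using is_limit_avoid[OF y(1) V1(1,3)] by simp
  ultimately show False using type_compl[OF p Y(1)] by simp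
qed

lemma is_limit_exists:
  assumes p: "p \<in> S" shows "\<exists>y. is_limit p y"
proof -
  define cl where "cl D = X closure_of (orbit ` (G \<inter> D))" for D
  have "\<Inter>(cl ` p) \<noteq> {}"
  proof (rule G_flow_compact[OF G_flow_X, unfolded compact_space_fip, rule_format], intro conjI ballI allI impI)
    fix C assume "C \<in> cl ` p" then show "closedin X C" by (auto simp: cl_def)
  next
    fix F assume F: "finite F \<and> F \<subseteq> cl ` p"
    then obtain Q where Q: "Q \<subseteq> p" "finite Q" "F = cl ` Q" using finite_subset_image by metis
    have "G \<inter> (Mn \<inter> \<Inter>Q) \<in> p" using type_finite_Inter[OF Q(2) p Q(1)] type_Int[OF p type_G[OF p]] by blast
    then obtain g where g: "g \<in> G \<inter> (Mn \<inter> \<Inter>Q)" using type_nonempty[OF p] by (metis equals0I)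
    have "orbit g \<in> cl D" if "D \<in> Q" for D
      using g that closure_of_subset[OF orbit_topspace] unfolding cl_def by blast
    then show "\<Inter>F \<noteq> {}" using Q(3) by blast
  qed
  then obtain y where y: "y \<in> \<Inter>(cl ` p)" by blast
  moreover have "cl Mn \<subseteq> topspace X" by (simp add: cl_def closure_of_subset_topspace)
  ultimately have "y \<in> topspace X" using type_tuples[OF p] by blast
  then show ?thesis using y unfolding is_limit_def cl_def by blast
qed

lemma limit_is_limit: "p \<in> S \<Longrightarrow> is_limit p (limit p)"
  unfolding limit_def using is_limit_exists is_limit_unique by (metis theI)

lemma limit_eqI: "p \<in> S \<Longrightarrow> is_limit p y \<Longrightarrow> limit p = y"
  using limit_is_limit is_limit_unique by blast

lemma limit_topspace: "p \<in> S \<Longrightarrow> limit p \<in> topspace X"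
  using limit_is_limit by (simp add: is_limit_def)

lemma limit_tp: assumes g: "g \<in> G" shows "limit (tp g) = orbit g"
proof (rule limit_eqI[OF tp_in_S[OF g]])
  have "orbit g \<in> X closure_of (orbit ` (G \<inter> D))" if "D \<in> tp g" for D
    using that g closure_of_subset[OF orbit_topspace] by (auto simp: tp_def)
  then show "is_limit (tp g) (orbit g)"
    using orbit_topspace g unfolding is_limit_def by blast
qed

lemma limit_continuous: "continuous_map T X limit"
  unfolding continuous_map topspace_T
proof (intro conjI allI impI)
  show "limit ` S \<subseteq> topspace X" using limit_topspace by blast
  fix U assume U: "openin X U"
  show "openin T {p \<in> S. limit p \<in> U}"
  proof (subst openin_subopen, intro ballI)
    fix p assume "p \<in> {p \<in> S. limit p \<in> U}"
    then have p: "p \<in> S" "limit p \<in> U" by auto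
    obtain V K where VK: "openin X V" "closedin X K" "limit p \<in> V" "V \<subseteq> K" "K \<subseteq> U"
      using regular_space_closed_nbhd[OF regular_X U p(2)] .
    obtain W C where WC: "openin X W" "closedin X C" "limit p \<in> W" "W \<subseteq> C" "C \<subseteq> V"
      using regular_space_closed_nbhd[OF regular_X VK(1,3)] .
    have "closedin X (topspace X - V)" "C \<inter> (topspace X - V) = {}" using VK(1) WC(5) by auto
    then obtain Y where Y: "Def Y" "{g \<in> G. orbit g \<in> C} \<subseteq> Y" "Y \<inter> {g \<in> G. orbit g \<in> topspace X - V} = {}"
      by (rule orbit_separation[OF WC(2)])
    have "W \<inter> orbit ` (G \<inter> (Mn - Y)) = {}"
    proof (intro equals0I)
      fix x assume "x \<in> W \<inter> orbit ` (G \<inter> (Mn - Y))"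
      then obtain g where "g \<in> G" "g \<notin> Y" "orbit g \<in> C" using WC(4) by auto
      then show False using Y(2) by auto
    qed
    then have "Mn - Y \<notin> p" using is_limit_avoid[OF limit_is_limit[OF p(1)] WC(1,3)] by simp
    then have "Y \<in> p" using type_compl[OF p(1) Y(1)] by simp
    moreover have "limit q \<in> U" if "q \<in> basic Y" for q
    proof -
      have q: "q \<in> S" "Y \<in> q" using that by (auto simp: basic_def)
      have "orbit ` (G \<inter> Y) \<subseteq> V" using Y(3) orbit_topspace by auto
      then have "orbit ` (G \<inter> Y) \<subseteq> K" using VK(4) by (rule order_trans)
      then have "X closure_of (orbit ` (G \<inter> Y)) \<subseteq> K" using closure_of_minimal VK(2) by blast
      then show ?thesis using limit_is_limit[OF q(1)] q(2) VK(5) unfolding is_limit_def by blast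
    qed
    ultimately show "\<exists>B. openin T B \<and> p \<in> B \<and> B \<subseteq> {p \<in> S. limit p \<in> U}"
      using openin_basic[OF Y(1)] p(1) by (intro exI[of _ "basic Y"]) (auto simp: basic_def)
  qed
qed

lemma limit_act: assumes h: "h \<in> G" and p: "p \<in> S" shows "limit (act h p) = actX h (limit p)"
proof (rule limit_eqI[OF act_in_S[OF h p]])
  have "actX h (limit p) \<in> X closure_of (orbit ` (G \<inter> D))" if "D \<in> act h p" for D
  proof -
    have "translate h D \<in> p" using that by (simp add: mem_act)
    then have "limit p \<in> X closure_of (orbit ` (G \<inter> translate h D))"
      using limit_is_limit[OF p] by (simp add: is_limit_def)
    then have "actX h (limit p) \<in> X closure_of (actX h ` orbit ` (G \<inter> translate h D))"
      using homeomorphic_map_closure_of[OF G_flow_homeomorphic[OF G_flow_X h] orbit_topspace] by blast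
    moreover have "actX h ` orbit ` (G \<inter> translate h D) \<subseteq> orbit ` (G \<inter> D)"
    proof
      fix y assume "y \<in> actX h ` orbit ` (G \<inter> translate h D)"
      then obtain a where a: "a \<in> G" "h \<otimes>\<^bsub>Gr\<^esub> a \<in> D" "y = actX h (orbit a)"
        by (auto simp: translate_def)
      then have "y = orbit (h \<otimes>\<^bsub>Gr\<^esub> a)" using G_flow_mult[OF G_flow_X h a(1) x0] by (simp add: orbit_def)
      then show "y \<in> orbit ` (G \<inter> D)" using a mult_closed[OF h a(1)] by blast
    qed
    ultimately show ?thesis using closure_of_mono by blast
  qed
  then show "is_limit (act h p) (actX h (limit p))"
    unfolding is_limit_def using G_flow_act_topspace[OF G_flow_X h limit_topspace[OF p]] by blast
qed

lemma G_map_limit: "G_map Gr T act X actX limit"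
  unfolding G_map_def topspace_T using limit_continuous limit_act by blast

end

section \<open>The Ellis semigroup and minimal subflows\<close>

context definable_group_definable_types
begin

lemma definable_flow_point_T: "q \<in> S \<Longrightarrow> definable_flow_point M n Gr T act q"
  unfolding definable_flow_point_def definable_flow_point_axioms_def
  using definable_group_axioms def_flow_T topspace_T by simp

text \<open>The Ellis product on \<open>S\<close>: \<open>p * q\<close> is the limit of \<open>g q\<close> as \<open>g\<close> tends to \<open>p\<close>.\<close>
definition type_mult :: "'a list set set \<Rightarrow> 'a list set set \<Rightarrow> 'a list set set" where
  "type_mult p q = definable_flow_point.limit Gr T act q p"

lemma type_mult_in_S: "p \<in> S \<Longrightarrow> q \<in> S \<Longrightarrow> type_mult p q \<in> S"
  unfolding type_mult_def using definable_flow_point.limit_topspace[OF definable_flow_point_T] topspace_T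
  by metis

lemma type_mult_continuous: "q \<in> S \<Longrightarrow> continuous_map T T (\<lambda>p. type_mult p q)"
  unfolding type_mult_def using definable_flow_point.limit_continuous[OF definable_flow_point_T] by blast

lemma type_mult_tp: "g \<in> G \<Longrightarrow> q \<in> S \<Longrightarrow> type_mult (tp g) q = act g q"
  unfolding type_mult_def
  using definable_flow_point.limit_tp[OF definable_flow_point_T] definable_flow_point.orbit_def[OF definable_flow_point_T]
  by metis

lemma type_mult_act: "h \<in> G \<Longrightarrow> p \<in> S \<Longrightarrow> q \<in> S \<Longrightarrow> type_mult (act h p) q = act h (type_mult p q)"
  unfolding type_mult_def using definable_flow_point.limit_act[OF definable_flow_point_T] by metis

lemma eq_on_realized_types:
  assumes "Hausdorff_space Z" "continuous_map T Z f1" "continuous_map T Z f2"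
    and "\<And>g. g \<in> G \<Longrightarrow> f1 (tp g) = f2 (tp g)" and "p \<in> S"
  shows "f1 p = f2 p"
  using forall_in_closure_of_eq[of p T "tp ` G" Z f1 f2] assms realized_types_dense by blast

lemma type_mult_assoc:
  assumes p: "p \<in> S" and q: "q \<in> S" and r: "r \<in> S"
  shows "type_mult (type_mult p q) r = type_mult p (type_mult q r)"
proof (rule eq_on_realized_types[OF Hausdorff_T _ _ _ p])
  show "continuous_map T T (\<lambda>p. type_mult (type_mult p q) r)"
    using continuous_map_compose[OF type_mult_continuous[OF q] type_mult_continuous[OF r]]
    by (simp add: comp_def)
  show "continuous_map T T (\<lambda>p. type_mult p (type_mult q r))"
    using type_mult_continuous[OF type_mult_in_S[OF q r]] .
  fix g assume g: "g \<in> G"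
  then show "type_mult (type_mult (tp g) q) r = type_mult (tp g) (type_mult q r)"
    using q r type_mult_tp type_mult_act type_mult_in_S by simp
qed

lemma type_mult_closed_invariant:
  assumes Y: "closedin T Y" "invariant Gr act Y" and q: "q \<in> Y" and p: "p \<in> S"
  shows "type_mult p q \<in> Y"
proof -
  have qS: "q \<in> S" using q closedin_subset[OF Y(1)] topspace_T by blast
  interpret E: definable_flow_point M n Gr T act q using definable_flow_point_T[OF qS] .
  have "E.orbit ` (G \<inter> Mn) \<subseteq> Y" using Y(2) q unfolding E.orbit_def invariant_def by blast
  then have "T closure_of (E.orbit ` (G \<inter> Mn)) \<subseteq> Y" using closure_of_minimal Y(1) by blast
  moreover have "E.limit p \<in> T closure_of (E.orbit ` (G \<inter> Mn))"
    using E.limit_is_limit[OF p] type_tuples[OF p] unfolding E.is_limit_def by blast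
  ultimately show ?thesis unfolding type_mult_def by blast
qed

context
  fixes I assumes I: "minimal_subflow Gr T act I"
begin

lemma I_closed: "closedin T I" and I_invariant: "invariant Gr act I"
  using I by (auto simp: minimal_subflow_def)

lemma I_subset_S: "I \<subseteq> S"
  using closedin_subset[OF I_closed] topspace_T by simp

lemma type_mult_in_I: "p \<in> S \<Longrightarrow> q \<in> I \<Longrightarrow> type_mult p q \<in> I"
  using type_mult_closed_invariant[OF I_closed I_invariant] by blast

lemma type_mult_image_I: assumes y: "y \<in> I" shows "(\<lambda>p. type_mult p y) ` I = I"
proof (rule minimal_subflow_minimal[OF I])
  have yS: "y \<in> S" using y I_subset_S by blast
  show "(\<lambda>p. type_mult p y) ` I \<noteq> {}" using I by (auto simp: minimal_subflow_def)
  show "closedin T ((\<lambda>p. type_mult p y) ` I)"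
    using closedin_compact_image[OF compact_T Hausdorff_T type_mult_continuous[OF yS] I_closed] .
  show "(\<lambda>p. type_mult p y) ` I \<subseteq> I" using type_mult_in_I y I_subset_S by blast
  show "invariant Gr act ((\<lambda>p. type_mult p y) ` I)"
    unfolding invariant_def
  proof (intro ballI)
    fix g z assume g: "g \<in> G" and "z \<in> (\<lambda>p. type_mult p y) ` I"
    then obtain p where p: "p \<in> I" "z = type_mult p y" by blast
    then have "act g z = type_mult (act g p) y" using type_mult_act[OF g _ yS] I_subset_S by auto
    moreover have "act g p \<in> I" using I_invariant g p(1) unfolding invariant_def by blast
    ultimately show "act g z \<in> (\<lambda>p. type_mult p y) ` I" by blast
  qed
qed

lemma idempotent_in_I: "\<exists>u\<in>I. type_mult u u = u"
proof (rule Ellis_Numakura[OF compact_T Hausdorff_T, where m = type_mult])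
  have "I \<noteq> {}" using I by (simp add: minimal_subflow_def)
  then show "closed_subsemigroup T type_mult I"
    using I_closed type_mult_in_I I_subset_S unfolding closed_subsemigroup_def by blast
  show "type_mult (type_mult a b) c = type_mult a (type_mult b c)" if "a \<in> I" "b \<in> I" "c \<in> I" for a b c
    using that type_mult_assoc I_subset_S by blast
  show "continuous_map T T (\<lambda>a. type_mult a b)" if "b \<in> I" for b
    using that type_mult_continuous I_subset_S by blast
qed

lemma idempotent_right_unit:
  assumes e: "e \<in> I" "type_mult e e = e" and q: "q \<in> I"
  shows "type_mult q e = q"
proof -
  obtain s where s: "s \<in> I" "q = type_mult s e" using type_mult_image_I[OF e(1)] q by blast
  then have "type_mult q e = type_mult s (type_mult e e)" using type_mult_assoc I_subset_S e(1) by blast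
  then show ?thesis using e(2) s(2) by simp
qed

lemma G_endomorphism_right_mult:
  assumes \<phi>: "G_map Gr (subtopology T I) act (subtopology T I) act \<phi>"
    and u: "u \<in> I" "type_mult u u = u" and p: "p \<in> I"
  shows "\<phi> p = type_mult p (\<phi> u)"
proof -
  have top: "topspace (subtopology T I) = I" using I_subset_S topspace_T by (simp add: Int_absorb1)
  have \<phi>_cont: "continuous_map (subtopology T I) (subtopology T I) \<phi>" using G_map_continuous[OF \<phi>] .
  define r where "r = \<phi> u"
  have r: "r \<in> I" using continuous_map_image_subset_topspace[OF \<phi>_cont] top u(1) by (auto simp: r_def)
  have uS: "u \<in> S" and rS: "r \<in> S" using u(1) r I_subset_S by auto
  have "continuous_map T (subtopology T I) (\<lambda>s. type_mult s u)"
    by (rule continuous_map_into_subtopology[OF type_mult_continuous[OF uS]])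
      (use type_mult_in_I u(1) topspace_T in auto)
  then have "continuous_map T (subtopology T I) (\<phi> \<circ> (\<lambda>s. type_mult s u))"
    using \<phi>_cont by (rule continuous_map_compose)
  then have cont: "continuous_map T T (\<lambda>s. \<phi> (type_mult s u))"
    by (simp add: continuous_map_in_subtopology comp_def)
  have "\<phi> (type_mult s u) = type_mult s r" if "s \<in> S" for s
  proof (rule eq_on_realized_types[OF Hausdorff_T cont type_mult_continuous[OF rS] _ that])
    fix g assume g: "g \<in> G"
    have "\<phi> (type_mult (tp g) u) = \<phi> (act g u)" using type_mult_tp[OF g uS] by simp
    also have "\<dots> = act g r" using G_map_equivariant[OF \<phi> g, of u] u(1) uS by (simp add: r_def topspace_T)
    also have "\<dots> = type_mult (tp g) r" using type_mult_tp[OF g rS] by simp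
    finally show "\<phi> (type_mult (tp g) u) = type_mult (tp g) r" .
  qed
  moreover have "p \<in> S" using p I_subset_S by blast
  ultimately have "\<phi> (type_mult p u) = type_mult p r" by blast
  then show ?thesis using idempotent_right_unit[OF u p] by (simp add: r_def)
qed

text \<open>Coalescence: with \<open>r = \<phi> u\<close> for an idempotent \<open>u\<close>, the map \<open>p \<mapsto> p t\<close> is a left
inverse of \<open>\<phi>\<close> for any \<open>t\<close> with \<open>t r = u\<close>.\<close>
lemma G_endomorphism_inj:
  assumes \<phi>: "G_map Gr (subtopology T I) act (subtopology T I) act \<phi>"
  shows "inj_on \<phi> I"
proof -
  obtain u where u: "u \<in> I" "type_mult u u = u" using idempotent_in_I by blast
  define r where "r = \<phi> u"
  have top: "topspace (subtopology T I) = I" using I_subset_S topspace_T by (simp add: Int_absorb1)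
  have r: "r \<in> I"
    using continuous_map_image_subset_topspace[OF G_map_continuous[OF \<phi>]] top u(1) by (auto simp: r_def)
  have "u \<in> (\<lambda>p. type_mult p r) ` I" using type_mult_image_I[OF r] u(1) by simp
  then obtain t where t: "t \<in> I" "type_mult t r = u" by blast
  have S: "u \<in> S" "r \<in> S" "t \<in> S" using u(1) r t(1) I_subset_S by auto
  define e where "e = type_mult r t"
  have e: "e \<in> I" unfolding e_def using type_mult_in_I[OF S(2) t(1)] .
  have "type_mult e e = type_mult r (type_mult (type_mult t r) t)"
    using type_mult_assoc[OF S(2,3) type_mult_in_S[OF S(2,3)]] type_mult_assoc[OF S(3,2,3)]
    by (simp add: e_def)
  also have "\<dots> = e"
    using t(2) type_mult_assoc[OF S(2,1,3)] idempotent_right_unit[OF u r] by (simp add: e_def)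
  finally have ee: "type_mult e e = e" .
  have "p = type_mult (\<phi> p) t" if p: "p \<in> I" for p
  proof -
    have "p = type_mult p e" using idempotent_right_unit[OF e ee p] by simp
    also have "\<dots> = type_mult (type_mult p r) t"
      using type_mult_assoc[OF _ S(2,3), of p] p I_subset_S by (auto simp: e_def)
    finally show ?thesis using G_endomorphism_right_mult[OF \<phi> u p] by (simp add: r_def)
  qed
  then show ?thesis by (metis inj_onI)
qed

lemma minimal_subflow_universal:
  assumes X: "min_def_flow M n Gr X actX"
  shows "\<exists>f. G_map Gr (subtopology T I) act X actX f"
proof -
  have "def_flow M n Gr X actX" "topspace X \<noteq> {}"
    using X by (simp_all add: min_def_flow_def minimal_subflow_def)
  then obtain x0 where "definable_flow_point M n Gr X actX x0"
    unfolding definable_flow_point_def definable_flow_point_axioms_def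
    using definable_group_axioms by blast
  then interpret P: definable_flow_point M n Gr X actX x0 .
  have "G_map Gr (subtopology T I) act X actX P.limit"
    using P.G_map_limit continuous_map_from_subtopology I_subset_S unfolding G_map_def by fastforce
  then show ?thesis by blast
qed

lemma min_def_flow_I: "min_def_flow M n Gr (subtopology T I) act"
  using min_def_flow_subtopology[OF group def_flow_T I] .

lemma univ_min_def_flow_I: "univ_min_def_flow M n Gr (subtopology T I) act TYPE('x)"
  unfolding univ_min_def_flow_def using min_def_flow_I minimal_subflow_universal by blast

lemma G_iso_univ_min_def_flow:
  assumes J: "univ_min_def_flow M n Gr J actJ TYPE('a list set set)"
  shows "\<exists>h. G_iso Gr (subtopology T I) act J actJ h"
proof -
  have J_flow: "min_def_flow M n Gr J actJ" using J by (simp add: univ_min_def_flow_def)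
  obtain h where h: "G_map Gr (subtopology T I) act J actJ h"
    using minimal_subflow_universal[OF J_flow] by blast
  obtain f where f: "G_map Gr J actJ (subtopology T I) act f"
    using J min_def_flow_I unfolding univ_min_def_flow_def by blast
  have "G_iso Gr (subtopology T I) act J actJ h"
  proof (rule G_iso_if_endomorphisms_inj[OF _ _ _ _ h f])
    show "G_flow Gr (subtopology T I) act" "G_flow Gr J actJ"
      using min_def_flow_I J_flow by (simp_all add: min_def_flow_def def_flow_def)
    show "topspace (subtopology T I) \<noteq> {}" "minimal_subflow Gr J actJ (topspace J)"
      using min_def_flow_I J_flow by (simp_all add: min_def_flow_def minimal_subflow_def)
    show "inj_on \<phi> (topspace (subtopology T I))"
      if "G_map Gr (subtopology T I) act (subtopology T I) act \<phi>" for \<phi>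
      using G_endomorphism_inj[OF that] I_subset_S topspace_T by (simp add: Int_absorb1)
  qed
  then show ?thesis by blast
qed

end

end

theorem proposition3p12:
  fixes M :: "('a, 'f, 'r) struc" and n :: nat and Gr :: "('a list, 'b) monoid_scheme"
  assumes "is_struc M"
    and "group Gr"
    and "definable M n (carrier Gr)"
    and "definable M (3 * n)
           {x @ y @ z | x y z. x \<in> carrier Gr \<and> y \<in> carrier Gr \<and> z = x \<otimes>\<^bsub>Gr\<^esub> y}"
    and "\<forall>p \<in> SG M n (carrier Gr). definable_type M n p"
  shows "(\<exists>I. minimal_subflow Gr (SG_top M n (carrier Gr)) (type_act M n Gr) I)
    \<and> (\<forall>I. minimal_subflow Gr (SG_top M n (carrier Gr)) (type_act M n Gr) I \<longrightarrow>
          univ_min_def_flow M n Gr (subtopology (SG_top M n (carrier Gr)) I) (type_act M n Gr)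
             TYPE('x)
        \<and> (\<forall>(J :: 'y topology) actJ.
              univ_min_def_flow M n Gr J actJ TYPE('a list set set) \<longrightarrow>
              (\<exists>f. G_iso Gr (subtopology (SG_top M n (carrier Gr)) I) (type_act M n Gr) J actJ f)))"
proof -
  interpret definable_group_definable_types M n Gr
    using assms unfolding definable_group_definable_types_def definable_group_def
      definable_group_definable_types_axioms_def by simp
  have "tp \<one>\<^bsub>Gr\<^esub> \<in> S" using tp_in_S group by (simp add: group.is_monoid monoid.one_closed)
  then have "\<exists>I. minimal_subflow Gr T act I"
    using minimal_subflow_exists[OF G_flow_T] topspace_T by auto
  then show ?thesis using univ_min_def_flow_I G_iso_univ_min_def_flow by blast
qed

end
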